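(* Let $p>1$ and let $f\in C^2(\mathbb R)$ be homogeneous of degree $p$, with $F(s)=\int_0^sf$. Then the equation $$(1-c^2)\varphi+\beta\varphi''+\varphi''''-f(\varphi)=0$$ has no nonzero solution $\varphi\in H^2(\mathbb R)$ if either of the following holds: (i) $c^2\ge 1$ and $\beta<\dfrac{2\sqrt{(3p+5)(p-1)(c^2-1)}}{p+3}$; (ii) $F(u)\ge0$ for all $u\in\mathbb R$, $c^2\ge1$ and $\beta\ge0$.
   Context: A function $f$ is homogeneous of degree $p$ if $f(\lambda s)=\lambda^pf(s)$ for all $\lambda>0$ and $s\in\mathbb R$. *)

theory Defs
  imports "HOL-Analysis.Analysis"
begin

text \<open>Test functions (C-infinity with compact support) on the real line, given together
  with the sequence of all their derivatives: D 0 is the function, D k its k-th derivative.\<close>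
definition test_fun :: "(nat \<Rightarrow> real \<Rightarrow> real) \<Rightarrow> bool" where
  "test_fun D \<longleftrightarrow> (\<forall>k x. (D k has_real_derivative D (Suc k) x) (at x)) \<and> bounded {x. D 0 x \<noteq> 0}"

definition L2 :: "(real \<Rightarrow> real) \<Rightarrow> bool" where
  "L2 u \<longleftrightarrow> u \<in> borel_measurable lborel \<and> integrable lborel (\<lambda>x. (u x)\<^sup>2)"

definition weak_deriv :: "(real \<Rightarrow> real) \<Rightarrow> (real \<Rightarrow> real) \<Rightarrow> bool" where
  "weak_deriv u g \<longleftrightarrow> (\<forall>D. test_fun D \<longrightarrow>
      (LINT x|lborel. u x * D 1 x) = - (LINT x|lborel. g x * D 0 x))"

definition H2 :: "(real \<Rightarrow> real) \<Rightarrow> bool" where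
  "H2 u \<longleftrightarrow> (\<exists>u1 u2. L2 u \<and> L2 u1 \<and> L2 u2 \<and> weak_deriv u u1 \<and> weak_deriv u1 u2)"

text \<open>phi is a (distributional) solution of (1-c^2) phi + beta phi'' + phi'''' - f(phi) = 0:
  tested against every test function, after moving all derivatives onto the test function.\<close>
definition weak_solution :: "real \<Rightarrow> real \<Rightarrow> (real \<Rightarrow> real) \<Rightarrow> (real \<Rightarrow> real) \<Rightarrow> bool" where
  "weak_solution c \<beta> f \<phi> \<longleftrightarrow> (\<forall>D. test_fun D \<longrightarrow>
      integrable lborel (\<lambda>x. (1 - c\<^sup>2) * \<phi> x * D 0 x + \<beta> * \<phi> x * D 2 x + \<phi> x * D 4 x - f (\<phi> x) * D 0 x)
    \<and> (LINT x|lborel. (1 - c\<^sup>2) * \<phi> x * D 0 x + \<beta> * \<phi> x * D 2 x + \<phi> x * D 4 x - f (\<phi> x) * D 0 x) = 0)"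

definition homogeneous :: "real \<Rightarrow> (real \<Rightarrow> real) \<Rightarrow> bool" where
  "homogeneous p f \<longleftrightarrow> (\<forall>t>0. \<forall>s. f (t * s) = t powr p * f s)"

definition C2 :: "(real \<Rightarrow> real) \<Rightarrow> bool" where
  "C2 f \<longleftrightarrow> (\<exists>f1 f2. (\<forall>x. (f has_real_derivative f1 x) (at x)) \<and>
      (\<forall>x. (f1 has_real_derivative f2 x) (at x)) \<and> continuous_on UNIV f2)"

end

(*
  A weak H^2 solution is first shown to be a classical C^4 solution: by the
  du Bois-Reymond lemma, a function whose distributional derivative is locally
  integrable coincides almost everywhere with a primitive of it, and applying this
  to phi, phi', phi'' and to the equation itself bootstraps the regularity.

  For a classical solution with phi, phi', phi'' in L^2, an integrable derivative V'
  has integral zero whenever V = s' + e with s and e integrable.  Testing the equation against phi gives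
    A - beta B - a C - (p + 1) G = 0,
  and the conserved Hamiltonian (which vanishes because phi' phi'' is integrable)
  gives
    3/2 A - beta/2 B + a/2 C + G = 0,
  where A, B, C are the squared L^2 norms of phi'', phi', phi, a = c^2 - 1 and G is
  the integral of F(phi) = phi f(phi) / (p + 1).  Eliminating G yields
    (3p + 5) A - (p + 3) beta B + (p - 1) a C = 0,
  which together with 2 B <= t A + C / t contradicts (i); eliminating beta B
  yields 2 A + 2 a C + (p + 3) G = 0, which under (ii) forces phi'' = 0 and hence
  phi = 0.
*)
theory Submission
  imports Defs "HOL-Computational_Algebra.Polynomial"
begin

definition locally_integrable :: "(real \<Rightarrow> real) \<Rightarrow> bool" where
  "locally_integrable h \<longleftrightarrow> h \<in> borel_measurable borel \<and> (\<forall>a b. set_integrable lborel {a..b} h)"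

lemma locally_integrable_integrable_on: "locally_integrable h \<Longrightarrow> h integrable_on {a..b}"
  unfolding locally_integrable_def using set_borel_integral_eq_integral(1) by blast

lemma locally_integrable_integral_eq:
  "locally_integrable h \<Longrightarrow> (LINT x:{a..b}|lborel. h x) = integral {a..b} h"
  unfolding locally_integrable_def using set_borel_integral_eq_integral(2) by blast

lemma continuous_imp_locally_integrable: "continuous_on UNIV h \<Longrightarrow> locally_integrable h"
  unfolding locally_integrable_def
  by (auto intro: borel_integrable_atLeastAtMost' continuous_on_subset borel_measurable_continuous_onI)

lemma L2_imp_locally_integrable:
  assumes "L2 u" shows "locally_integrable u"
  unfolding locally_integrable_def
proof (intro conjI allI)
  show m: "u \<in> borel_measurable borel" using assms by (simp add: L2_def)
  fix a b :: real
  have i1: "integrable lborel (\<lambda>x. indicator {a..b} x * (1::real))"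
    using borel_integrable_atLeastAtMost'[of a b "\<lambda>_. 1::real"] by (simp add: set_integrable_def)
  have i2: "integrable lborel (\<lambda>x. (u x)\<^sup>2)" using assms by (simp add: L2_def)
  show "set_integrable lborel {a..b} u"
    unfolding set_integrable_def
  proof (rule Bochner_Integration.integrable_bound[OF Bochner_Integration.integrable_add[OF i1 i2]])
    show "(\<lambda>x. indicator {a..b} x *\<^sub>R u x) \<in> borel_measurable lborel" using m by simp
    show "AE x in lborel. norm (indicator {a..b} x *\<^sub>R u x) \<le> norm (indicator {a..b} x * 1 + (u x)\<^sup>2)"
    proof (rule AE_I2)
      fix x
      have "\<bar>u x\<bar> \<le> 1 + (u x)\<^sup>2"
      proof (cases "\<bar>u x\<bar> \<le> 1")
        case True then show ?thesis by (smt (verit) zero_le_power2)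
      next
        case False
        then have "\<bar>u x\<bar> * 1 \<le> \<bar>u x\<bar> * \<bar>u x\<bar>" by (intro mult_left_mono) auto
        then show ?thesis by (simp add: power2_eq_square abs_mult_self_eq)
      qed
      then show "norm (indicator {a..b} x *\<^sub>R u x) \<le> norm (indicator {a..b} x * 1 + (u x)\<^sup>2)"
        by (auto simp: indicator_def)
    qed
  qed
qed

lemma locally_integrable_lincomb:
  "locally_integrable f \<Longrightarrow> locally_integrable g \<Longrightarrow> locally_integrable (\<lambda>x. a * f x + b * g x)"
  unfolding locally_integrable_def set_integrable_def
  by (auto intro!: Bochner_Integration.integrable_add integrable_mult_right simp: algebra_simps)

definition primitive :: "real \<Rightarrow> (real \<Rightarrow> real) \<Rightarrow> real \<Rightarrow> real" where
  "primitive a g x = (if a \<le> x then integral {a..x} g else - integral {x..a} g)"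

lemma primitive_eq_diff:
  assumes "locally_integrable g" "lo \<le> a" "lo \<le> x"
  shows "primitive a g x = integral {lo..x} g - integral {lo..a} g"
proof -
  have int: "g integrable_on {u..v}" for u v
    using assms(1) by (rule locally_integrable_integrable_on)
  show ?thesis
  proof (cases "a \<le> x")
    case True
    then show ?thesis
      using Henstock_Kurzweil_Integration.integral_combine[OF assms(2) True int] by (simp add: primitive_def)
  next
    case False
    then show ?thesis
      using Henstock_Kurzweil_Integration.integral_combine[OF assms(3) _ int, of a] by (simp add: primitive_def)
  qed
qed

lemma primitive_change_base:
  "locally_integrable g \<Longrightarrow> primitive a g x = primitive b g x + primitive a g b"
  using primitive_eq_diff[of g "min (min a b) x" a x] primitive_eq_diff[of g "min (min a b) x" b x]
    primitive_eq_diff[of g "min (min a b) x" a b]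
  by simp

lemma primitive_has_derivative:
  assumes "continuous_on UNIV g"
  shows "(primitive a g has_real_derivative g x) (at x)"
proof -
  define lo where "lo = min a x - 1"
  define hi where "hi = x + 1"
  have cg: "continuous_on {lo..hi} g" using assms continuous_on_subset by blast
  have "((\<lambda>y. integral {lo..y} g - integral {lo..a} g) has_real_derivative g x) (at x within {lo..hi})"
    using integral_has_real_derivative[OF cg, of x] unfolding lo_def hi_def
    by (auto intro!: derivative_eq_intros)
  then have d: "((\<lambda>y. integral {lo..y} g - integral {lo..a} g) has_real_derivative g x) (at x)"
    by (subst (asm) at_within_interior[of x]) (auto simp: lo_def hi_def)
  show ?thesis
  proof (rule has_field_derivative_transform_within_open[OF d, of "{lo<..}"])
    show "integral {lo..y} g - integral {lo..a} g = primitive a g y" if "y \<in> {lo<..}" for y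
      using that assms by (intro primitive_eq_diff[symmetric] continuous_imp_locally_integrable)
         (auto simp: lo_def)
  qed (auto simp: lo_def)
qed

lemma continuous_on_primitive:
  assumes "locally_integrable g" shows "continuous_on UNIV (primitive a g)"
proof -
  have "isCont (primitive a g) x" for x
  proof -
    define lo where "lo = min a x - 1"
    define hi where "hi = x + 1"
    have c: "continuous_on {lo..hi} (\<lambda>y. integral {lo..y} g)"
      by (rule indefinite_integral_continuous_1[OF locally_integrable_integrable_on[OF assms]])
    then have "continuous_on {lo<..<hi} (\<lambda>y. integral {lo..y} g - integral {lo..a} g)"
      by (auto intro!: continuous_intros continuous_on_subset[OF c])
    then have "continuous_on {lo<..<hi} (primitive a g)"
      by (rule continuous_on_cong[THEN iffD1, rotated 2])
         (auto simp: lo_def intro!: primitive_eq_diff[OF assms, symmetric])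
    then show ?thesis
      by (rule continuous_on_interior) (auto simp: lo_def hi_def)
  qed
  then show ?thesis by (simp add: continuous_at_imp_continuous_on)
qed

lemma primitive_const: "primitive 0 (\<lambda>_. k) x = k * x"
  by (simp add: primitive_def)

lemma primitive_cong_AE:
  assumes f: "locally_integrable f" and g: "locally_integrable g" and e: "AE x in lborel. f x = g x"
  shows "primitive a f = primitive a g"
proof -
  have "integral {u..v} f = integral {u..v} g" for u v
  proof -
    have "(LINT x:{u..v}|lborel. f x) = (LINT x:{u..v}|lborel. g x)"
      unfolding set_lebesgue_integral_def
      by (rule integral_cong_AE) (use f g e in \<open>auto simp: locally_integrable_def elim: AE_mp\<close>)
    then show ?thesis
      using locally_integrable_integral_eq[OF f] locally_integrable_integral_eq[OF g] by simp
  qed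
  then show ?thesis by (simp add: primitive_def fun_eq_iff)
qed

definition smooth_seq :: "(nat \<Rightarrow> real \<Rightarrow> real) \<Rightarrow> bool" where
  "smooth_seq D \<longleftrightarrow> (\<forall>k x. (D k has_real_derivative D (Suc k) x) (at x))"

lemma test_fun_iff_smooth_seq: "test_fun D \<longleftrightarrow> smooth_seq D \<and> bounded {x. D 0 x \<noteq> 0}"
  by (simp add: test_fun_def smooth_seq_def)

lemma smooth_seq_continuous: "smooth_seq D \<Longrightarrow> continuous_on UNIV (D k)"
  unfolding smooth_seq_def by (meson DERIV_isCont continuous_at_imp_continuous_on)

lemma smooth_seq_shift: "smooth_seq D \<Longrightarrow> smooth_seq (\<lambda>k. D (Suc k))"
  unfolding smooth_seq_def by blast

lemma smooth_seq_lincomb: "smooth_seq D \<Longrightarrow> smooth_seq E \<Longrightarrow> smooth_seq (\<lambda>k x. a * D k x + b * E k x)"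
  unfolding smooth_seq_def by (auto intro!: derivative_eq_intros)

lemma smooth_seq_affine: "smooth_seq D \<Longrightarrow> smooth_seq (\<lambda>k x. c ^ k * D k (c * x + d))"
  unfolding smooth_seq_def
proof (intro allI)
  fix k x assume D: "\<forall>k x. (D k has_real_derivative D (Suc k) x) (at x)"
  have "((\<lambda>x. D k (c * x + d)) has_real_derivative D (Suc k) (c * x + d) * c) (at x)"
    by (rule DERIV_chain2[OF D[rule_format]]) (auto intro!: derivative_eq_intros)
  then show "((\<lambda>x. c ^ k * D k (c * x + d)) has_real_derivative c ^ Suc k * D (Suc k) (c * x + d)) (at x)"
    by (auto intro!: derivative_eq_intros simp: algebra_simps)
qed

definition seq_mult :: "(nat \<Rightarrow> real \<Rightarrow> real) \<Rightarrow> (nat \<Rightarrow> real \<Rightarrow> real) \<Rightarrow> nat \<Rightarrow> real \<Rightarrow> real" where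
  "seq_mult D E = (\<lambda>k x. \<Sum>j\<le>k. real (k choose j) * D j x * E (k - j) x)"

lemma leibniz_sum_Suc:
  fixes a b :: "nat \<Rightarrow> real"
  shows "(\<Sum>j\<le>k. real (k choose j) * (a (Suc j) * b (k - j) + a j * b (Suc (k - j))))
       = (\<Sum>j\<le>Suc k. real (Suc k choose j) * a j * b (Suc k - j))"
proof -
  have e1: "(\<Sum>j\<le>Suc k. real (k choose j) * a j * b (Suc k - j))
      = a 0 * b (Suc k) + (\<Sum>j\<le>k. real (k choose Suc j) * a (Suc j) * b (k - j))"
    by (subst sum.atMost_Suc_shift) simp
  have e2: "(\<Sum>j\<le>Suc k. real (k choose j) * a j * b (Suc k - j))
      = (\<Sum>j\<le>k. real (k choose j) * a j * b (Suc (k - j)))"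
    by (simp add: Suc_diff_le)
  have "(\<Sum>j\<le>Suc k. real (Suc k choose j) * a j * b (Suc k - j))
      = a 0 * b (Suc k) + (\<Sum>j\<le>k. real (Suc k choose Suc j) * a (Suc j) * b (k - j))"
    by (subst sum.atMost_Suc_shift) simp
  also have "\<dots> = a 0 * b (Suc k) + (\<Sum>j\<le>k. real (k choose Suc j) * a (Suc j) * b (k - j))
       + (\<Sum>j\<le>k. real (k choose j) * a (Suc j) * b (k - j))"
    by (simp add: algebra_simps sum.distrib)
  also have "\<dots> = (\<Sum>j\<le>k. real (k choose j) * a j * b (Suc (k - j)))
       + (\<Sum>j\<le>k. real (k choose j) * a (Suc j) * b (k - j))"
    using e1 e2 by simp
  also have "\<dots> = (\<Sum>j\<le>k. real (k choose j) * (a (Suc j) * b (k - j) + a j * b (Suc (k - j))))"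
    by (simp add: algebra_simps sum.distrib)
  finally show ?thesis by simp
qed

lemma smooth_seq_mult: "smooth_seq D \<Longrightarrow> smooth_seq E \<Longrightarrow> smooth_seq (seq_mult D E)"
  unfolding smooth_seq_def
proof (intro allI)
  fix k x
  assume D: "\<forall>k x. (D k has_real_derivative D (Suc k) x) (at x)"
    and E: "\<forall>k x. (E k has_real_derivative E (Suc k) x) (at x)"
  have "((\<lambda>x. \<Sum>j\<le>k. real (k choose j) * D j x * E (k - j) x) has_real_derivative
      (\<Sum>j\<le>k. real (k choose j) * (D (Suc j) x * E (k - j) x + D j x * E (Suc (k - j)) x))) (at x)"
    by (rule DERIV_sum) (auto intro!: derivative_eq_intros D[rule_format] E[rule_format] simp: algebra_simps)
  then show "(seq_mult D E k has_real_derivative seq_mult D E (Suc k) x) (at x)"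
    unfolding seq_mult_def using leibniz_sum_Suc[of k "\<lambda>j. D j x" "\<lambda>j. E j x"] by simp
qed

lemma seq_mult_0: "seq_mult D E 0 x = D 0 x * E 0 x"
  by (simp add: seq_mult_def)

definition test_fun_within :: "(nat \<Rightarrow> real \<Rightarrow> real) \<Rightarrow> real \<Rightarrow> bool" where
  "test_fun_within D M \<longleftrightarrow> smooth_seq D \<and> (\<forall>k x. M < \<bar>x\<bar> \<longrightarrow> D k x = 0)"

lemma test_fun_withinI:
  assumes "smooth_seq D" "\<And>x. M < \<bar>x\<bar> \<Longrightarrow> D 0 x = 0"
  shows "test_fun_within D M"
  unfolding test_fun_within_def
proof (intro conjI assms allI impI)
  fix k x assume "M < \<bar>x\<bar>"
  then show "D k x = 0"
  proof (induction k arbitrary: x)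
    case 0 then show ?case using assms by simp
  next
    case (Suc k)
    define S where "S = {y. M < \<bar>y\<bar>}"
    have oS: "open S" unfolding S_def by (intro open_Collect_less continuous_intros)
    have "((\<lambda>_. 0) has_real_derivative D (Suc k) x) (at x)"
      by (rule has_field_derivative_transform_within_open[OF _ oS, of "D k"])
         (use assms(1) Suc in \<open>auto simp: smooth_seq_def S_def\<close>)
    then show ?case using DERIV_const DERIV_unique by blast
  qed
qed

lemma test_fun_within_imp_test_fun: "test_fun_within D M \<Longrightarrow> test_fun D"
  unfolding test_fun_within_def test_fun_iff_smooth_seq bounded_iff
  by (metis (mono_tags, lifting) linorder_not_le mem_Collect_eq real_norm_def)

lemma test_fun_imp_within: "test_fun D \<Longrightarrow> \<exists>M>0. test_fun_within D M"
proof -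
  assume t: "test_fun D"
  then obtain B where B: "\<And>x. D 0 x \<noteq> 0 \<Longrightarrow> \<bar>x\<bar> \<le> B"
    unfolding test_fun_iff_smooth_seq bounded_iff by auto
  have "test_fun_within D (max B 1)"
    by (rule test_fun_withinI) (use t B in \<open>auto simp: test_fun_iff_smooth_seq\<close>, force)
  then show ?thesis by (intro exI[of _ "max B 1"]) auto
qed

lemma test_fun_within_shift: "test_fun_within D M \<Longrightarrow> test_fun_within (\<lambda>k. D (Suc k)) M"
  unfolding test_fun_within_def using smooth_seq_shift by blast

lemma test_fun_within_lincomb:
  "test_fun_within D M \<Longrightarrow> test_fun_within E M \<Longrightarrow> test_fun_within (\<lambda>k x. a * D k x + b * E k x) M"
  unfolding test_fun_within_def using smooth_seq_lincomb by auto

lemma test_fun_within_mono: "test_fun_within D M \<Longrightarrow> M \<le> M' \<Longrightarrow> test_fun_within D M'"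
  unfolding test_fun_within_def by auto

lemma test_fun_within_bounded:
  assumes "test_fun_within D M" shows "\<exists>B. \<forall>x. \<bar>D k x\<bar> \<le> B"
proof -
  have "compact (D k ` {-M..M})"
    using assms by (intro compact_continuous_image continuous_on_subset[OF smooth_seq_continuous]) (auto simp: test_fun_within_def)
  then obtain B where B: "\<And>y. y \<in> D k ` {-M..M} \<Longrightarrow> \<bar>y\<bar> \<le> B"
    using compact_imp_bounded bounded_iff by (metis real_norm_def)
  have "\<bar>D k x\<bar> \<le> max B 0" for x
  proof (cases "\<bar>x\<bar> \<le> M")
    case True then show ?thesis using B[of "D k x"] by fastforce
  next
    case False then show ?thesis using assms by (simp add: test_fun_within_def)
  qed
  then show ?thesis by blast
qed

lemma test_fun_within_eq_0: "test_fun_within D M \<Longrightarrow> M < \<bar>x\<bar> \<Longrightarrow> D k x = 0"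
  by (simp add: test_fun_within_def)

lemma test_fun_within_measurable: "test_fun_within D M \<Longrightarrow> D k \<in> borel_measurable borel"
  unfolding test_fun_within_def by (intro borel_measurable_continuous_onI smooth_seq_continuous) auto

lemma integrable_mult_test:
  assumes h: "locally_integrable h" and D: "test_fun_within D M"
  shows "integrable lborel (\<lambda>x. h x * D k x)"
proof -
  obtain B where B: "\<And>x. \<bar>D k x\<bar> \<le> B" using test_fun_within_bounded[OF D] by blast
  have i: "integrable lborel (\<lambda>x. indicator {-M..M} x *\<^sub>R h x)"
    using h by (simp add: locally_integrable_def set_integrable_def)
  show ?thesis
  proof (rule Bochner_Integration.integrable_bound[OF integrable_mult_right[OF integrable_norm[OF i], of B]])
    show "(\<lambda>x. h x * D k x) \<in> borel_measurable lborel"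
      using h test_fun_within_measurable[OF D, of k] by (simp add: locally_integrable_def borel_measurable_times)
    show "AE x in lborel. norm (h x * D k x) \<le> norm (B * norm (indicator {-M..M} x *\<^sub>R h x))"
    proof (rule AE_I2)
      fix x
      show "norm (h x * D k x) \<le> norm (B * norm (indicator {-M..M} x *\<^sub>R h x))"
      proof (cases "\<bar>x\<bar> \<le> M")
        case True
        then have "\<bar>h x * D k x\<bar> \<le> \<bar>h x\<bar> * B" using B[of x] by (simp add: abs_mult mult_left_mono)
        then show ?thesis using True B[of x] by (auto simp: indicator_def abs_mult algebra_simps)
      next
        case False then show ?thesis using test_fun_within_eq_0[OF D, of x k] by simp
      qed
    qed
  qed
qed

lemma integrable_test_fun_within:
  "test_fun_within D M \<Longrightarrow> integrable lborel (D k)"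
  using integrable_mult_test[OF continuous_imp_locally_integrable[of "\<lambda>_. 1"]] by simp

lemma integral_atLeast_derivative_test:
  assumes D: "test_fun_within D M"
  shows "(LINT x|lborel. indicator {t..} x * D (Suc k) x) = - D k t"
proof -
  define N where "N = \<bar>M\<bar> + \<bar>t\<bar> + 1"
  have "(LINT x|lborel. indicator {t..} x * D (Suc k) x) = (LINT x|lborel. indicator {t..N} x *\<^sub>R D (Suc k) x)"
    using test_fun_within_eq_0[OF D, of _ "Suc k"]
    by (intro Bochner_Integration.integral_cong) (auto simp: indicator_def N_def)
  also have "\<dots> = D k N - D k t"
    using D unfolding test_fun_within_def smooth_seq_def
    by (intro integral_FTC_atLeastAtMost)
       (auto simp: N_def has_real_derivative_iff_has_vector_derivative[symmetric]
             intro: has_field_derivative_at_within smooth_seq_continuous[unfolded smooth_seq_def] continuous_on_subset)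
  also have "D k N = 0" using test_fun_within_eq_0[OF D, of N k] by (simp add: N_def)
  finally show ?thesis by simp
qed

lemma integral_derivative_test_eq_0:
  assumes D: "test_fun_within D M" shows "(LINT x|lborel. D (Suc k) x) = 0"
proof -
  have "(LINT x|lborel. D (Suc k) x) = (LINT x|lborel. indicator {-\<bar>M\<bar>-1..} x * D (Suc k) x)"
    using test_fun_within_eq_0[OF D, of _ "Suc k"]
    by (intro Bochner_Integration.integral_cong) (auto simp: indicator_def)
  also have "\<dots> = 0"
    using integral_atLeast_derivative_test[OF D] test_fun_within_eq_0[OF D, of "-\<bar>M\<bar>-1" k] by simp
  finally show ?thesis .
qed

lemma integral_triangle_swap:
  fixes u v :: "real \<Rightarrow> real"
  assumes u: "integrable lborel u" and v: "integrable lborel v"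
  shows "(LINT x|lborel. u x * (LINT t|lborel. indicator {..x} t * v t))
       = (LINT t|lborel. v t * (LINT x|lborel. indicator {t..} x * u x))"
proof -
  have [measurable]: "u \<in> borel_measurable borel" "v \<in> borel_measurable borel"
    using u v by (auto simp: borel_measurable_integrable)
  define F where "F = (\<lambda>x t. u x * v t * indicator {..x} t :: real)"
  have iG: "integrable (lborel \<Otimes>\<^sub>M lborel) (\<lambda>(x, t). \<bar>u x\<bar> * \<bar>v t\<bar>)"
  proof (rule lborel_pair.Fubini_integrable)
    show "integrable lborel (\<lambda>x. LINT t|lborel. norm (case (x, t) of (x, t) \<Rightarrow> \<bar>u x\<bar> * \<bar>v t\<bar>))"
      using integrable_mult_left[OF integrable_abs[OF u], of "LINT t|lborel. \<bar>v t\<bar>"] by (simp add: abs_mult)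
    show "AE x in lborel. integrable lborel (\<lambda>t. case (x, t) of (x, t) \<Rightarrow> \<bar>u x\<bar> * \<bar>v t\<bar>)"
      by (auto intro!: integrable_mult_right integrable_abs[OF v])
  qed measurable
  have iF: "integrable (lborel \<Otimes>\<^sub>M lborel) (\<lambda>(x, t). F x t)"
    by (rule Bochner_Integration.integrable_bound[OF iG]) (auto simp: F_def abs_mult indicator_def)
  have "(LINT x|lborel. u x * (LINT t|lborel. indicator {..x} t * v t)) = (LINT x|lborel. LINT t|lborel. F x t)"
    by (simp add: F_def mult_ac)
  also have "\<dots> = (LINT t|lborel. LINT x|lborel. F x t)"
    using lborel_pair.integral_fst[OF iF] lborel_pair.integral_snd[OF iF] by simp
  also have "\<dots> = (LINT t|lborel. v t * (LINT x|lborel. indicator {t..} x * u x))"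
    by (simp add: F_def indicator_def mult_ac flip: integral_mult_right_zero)
  finally show ?thesis .
qed

lemma integration_by_parts_primitive:
  assumes h: "locally_integrable h" and D: "test_fun_within D M"
  shows "(LINT x|lborel. primitive a h x * D (Suc 0) x) = - (LINT x|lborel. h x * D 0 x)"
proof -
  define N where "N = \<bar>M\<bar> + 1"
  have out: "D j x = 0" if "N \<le> \<bar>x\<bar>" for j x using test_fun_within_eq_0[OF D] that by (simp add: N_def)
  define v where "v t = indicator {-N..N} t * h t" for t
  have iv: "integrable lborel v"
    using h by (simp add: v_def[abs_def] locally_integrable_def set_integrable_def)
  have split: "primitive a h x * D (Suc 0) x = primitive (-N) h x * D (Suc 0) x + primitive a h (-N) * D (Suc 0) x" for x
    using primitive_change_base[OF h, of a x "-N"] by (simp add: algebra_simps)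
  have pointwise: "primitive (-N) h x * D (Suc 0) x = D (Suc 0) x * (LINT t|lborel. indicator {..x} t * v t)" for x
  proof (cases "N \<le> \<bar>x\<bar>")
    case False
    have "(LINT t|lborel. indicator {..x} t * v t) = (LINT t:{-N..x}|lborel. h t)"
      unfolding set_lebesgue_integral_def using False
      by (intro Bochner_Integration.integral_cong) (auto simp: v_def indicator_def)
    also have "\<dots> = primitive (-N) h x"
      using False locally_integrable_integral_eq[OF h] by (simp add: primitive_def)
    finally show ?thesis by simp
  qed (simp add: out)
  have "(LINT x|lborel. primitive a h x * D (Suc 0) x)
      = (LINT x|lborel. primitive (-N) h x * D (Suc 0) x) + primitive a h (-N) * (LINT x|lborel. D (Suc 0) x)"
    unfolding split
    using integrable_mult_test[OF continuous_imp_locally_integrable[OF continuous_on_primitive[OF h]] D]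
      integrable_test_fun_within[OF D]
    by simp
  also have "(LINT x|lborel. primitive (-N) h x * D (Suc 0) x)
      = (LINT x|lborel. D (Suc 0) x * (LINT t|lborel. indicator {..x} t * v t))"
    by (rule Bochner_Integration.integral_cong[OF refl pointwise])
  also have "(LINT x|lborel. D (Suc 0) x * (LINT t|lborel. indicator {..x} t * v t))
      = (LINT t|lborel. v t * (LINT x|lborel. indicator {t..} x * D (Suc 0) x))"
    by (rule integral_triangle_swap[OF integrable_test_fun_within[OF D] iv])
  also have "\<dots> = - (LINT t|lborel. h t * D 0 t)"
  proof -
    have vt: "v t * D 0 t = h t * D 0 t" for t
      using out[of t 0] by (cases "N \<le> \<bar>t\<bar>") (auto simp: v_def indicator_def)
    show ?thesis by (simp add: integral_atLeast_derivative_test[OF D] vt)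
  qed
  finally show ?thesis using integral_derivative_test_eq_0[OF D, of 0] by simp
qed

lemma integral_test_fun_within_eq:
  assumes D: "test_fun_within D M" and N: "\<bar>M\<bar> < N" "N \<le> x"
  shows "integral {-N..x} (D 0) = (LINT y|lborel. D 0 y)"
proof -
  have li: "locally_integrable (D 0)" using D by (intro continuous_imp_locally_integrable smooth_seq_continuous) (auto simp: test_fun_within_def)
  have "integral {-N..x} (D 0) = (LINT y:{-N..x}|lborel. D 0 y)"
    using locally_integrable_integral_eq[OF li] by simp
  also have "\<dots> = (LINT y|lborel. D 0 y)"
    unfolding set_lebesgue_integral_def
  proof (rule Bochner_Integration.integral_cong)
    fix y show "indicator {-N..x} y *\<^sub>R D 0 y = D 0 y"
      using D N by (cases "M < \<bar>y\<bar>") (auto simp: indicator_def test_fun_within_def)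
  qed simp
  finally show ?thesis .
qed

section \<open>Bump functions\<close>

text \<open>On \<open>x > 0\<close>, \<open>exp_bump k\<close> is the \<open>k\<close>-th derivative of \<open>exp (-1/x)\<close>, which has the form
  \<open>q (1/x) * exp (-1/x)\<close> for a polynomial \<open>q\<close>.\<close>
fun exp_bump_poly :: "nat \<Rightarrow> real poly" where
  "exp_bump_poly 0 = 1"
| "exp_bump_poly (Suc k) = [:0,0,1:] * (exp_bump_poly k - pderiv (exp_bump_poly k))"

definition exp_bump :: "nat \<Rightarrow> real \<Rightarrow> real" where
  "exp_bump k x = (if x \<le> 0 then 0 else poly (exp_bump_poly k) (1/x) * exp (-1/x))"

lemma poly_times_exp_tendsto_0: "((\<lambda>y. poly q y * y ^ n * exp (- y)) \<longlongrightarrow> (0::real)) at_top"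
proof (induction q arbitrary: n)
  case 0
  then show ?case by simp
next
  case (pCons a p)
  have "((\<lambda>y. a * (y ^ n / exp y) + poly p y * y ^ Suc n * exp (- y)) \<longlongrightarrow> a * 0 + 0) at_top"
    by (intro tendsto_intros tendsto_power_div_exp_0 pCons.IH)
  then show ?case
    by (simp add: exp_minus field_simps)
qed

lemma exp_bump_div_tendsto_0: "((\<lambda>y. exp_bump k y / y) \<longlongrightarrow> 0) (at 0)"
proof -
  have r: "((\<lambda>y. exp_bump k y / y) \<longlongrightarrow> 0) (at_right 0)"
  proof -
    have lim: "((\<lambda>y. poly (exp_bump_poly k) y * y ^ 1 * exp (- y)) \<longlongrightarrow> 0) at_top"
      by (rule poly_times_exp_tendsto_0)
    have "((\<lambda>y. poly (exp_bump_poly k) (inverse y) * (inverse y) ^ 1 * exp (- inverse y)) \<longlongrightarrow> 0) (at_right 0)"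
      by (rule filterlim_compose[OF lim filterlim_inverse_at_top_right])
    then show ?thesis
    proof (rule Lim_transform_eventually)
      show "\<forall>\<^sub>F y in at_right 0. poly (exp_bump_poly k) (inverse y) * inverse y ^ 1 * exp (- inverse y)
          = exp_bump k y / y"
        using eventually_at_right_less[of 0] by (rule eventually_mono) (simp add: exp_bump_def field_simps)
    qed
  qed
  have l: "((\<lambda>y. exp_bump k y / y) \<longlongrightarrow> 0) (at_left 0)"
  proof (rule Lim_transform_eventually[OF tendsto_const[of 0]])
    show "\<forall>\<^sub>F y in at_left 0. 0 = exp_bump k y / y"
      using eventually_at_left_real[where a=0 and b="-1"] by (rule eventually_mono) (auto simp: exp_bump_def)
  qed
  show ?thesis using r l by (simp add: filterlim_at_split)
qed

lemma exp_bump_has_derivative: "(exp_bump k has_real_derivative exp_bump (Suc k) x) (at x)"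
proof -
  consider "x < 0" | "x = 0" | "x > 0" by linarith
  then show ?thesis
  proof cases
    case 1
    have "(exp_bump k has_real_derivative 0) (at x)"
      by (rule has_field_derivative_transform_within_open[OF DERIV_const[of 0 "at x"], of "{..<0}"])
         (use 1 in \<open>auto simp: exp_bump_def\<close>)
    then show ?thesis using 1 by (simp add: exp_bump_def)
  next
    case 3
    let ?q = "exp_bump_poly k"
    have "((\<lambda>x. poly ?q (1/x) * exp (-1/x)) has_real_derivative
       poly (pderiv ?q) (1/x) * (- 1 / x^2) * exp (-1/x) + poly ?q (1/x) * (exp (-1/x) * (1 / x^2))) (at x)"
      using 3
      by (auto intro!: derivative_eq_intros DERIV_chain2[OF poly_DERIV] simp: power2_eq_square field_simps)
    also have "poly (pderiv ?q) (1/x) * (- 1 / x^2) * exp (-1/x) + poly ?q (1/x) * (exp (-1/x) * (1 / x^2))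
        = exp_bump (Suc k) x"
      using 3 by (simp add: exp_bump_def algebra_simps power2_eq_square)
    finally have d: "((\<lambda>x. poly ?q (1/x) * exp (-1/x)) has_real_derivative exp_bump (Suc k) x) (at x)" .
    show ?thesis
      by (rule has_field_derivative_transform_within_open[OF d, of "{0<..}"])
         (use 3 in \<open>auto simp: exp_bump_def\<close>)
  next
    case 2
    have "((\<lambda>y. (exp_bump k y - exp_bump k 0) / (y - 0)) \<longlongrightarrow> 0) (at 0)"
      using exp_bump_div_tendsto_0 by (simp add: exp_bump_def)
    then show ?thesis
      using 2 by (simp add: has_field_derivative_iff exp_bump_def)
  qed
qed

lemma smooth_seq_exp_bump: "smooth_seq exp_bump"
  unfolding smooth_seq_def using exp_bump_has_derivative by blast

lemma exp_bump_pos: "x > 0 \<Longrightarrow> exp_bump 0 x > 0"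
  by (simp add: exp_bump_def)

lemma exp_bump_nonneg: "exp_bump 0 x \<ge> 0"
  by (simp add: exp_bump_def)

definition bump :: "nat \<Rightarrow> real \<Rightarrow> real" where
  "bump = seq_mult (\<lambda>k x. 1 ^ k * exp_bump k (1 * x + 1)) (\<lambda>k x. (-1) ^ k * exp_bump k ((-1) * x + 1))"

lemma smooth_seq_bump: "smooth_seq bump"
  unfolding bump_def by (intro smooth_seq_mult smooth_seq_affine smooth_seq_exp_bump)

lemma bump_0: "bump 0 x = exp_bump 0 (x + 1) * exp_bump 0 (1 - x)"
  by (simp add: bump_def seq_mult_0)

lemma bump_nonneg: "bump 0 x \<ge> 0"
  by (simp add: bump_0 exp_bump_nonneg)

lemma bump_pos: "\<bar>x\<bar> < 1 \<Longrightarrow> bump 0 x > 0"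
  by (simp add: bump_0 exp_bump_pos)

lemma bump_eq_0: "1 \<le> \<bar>x\<bar> \<Longrightarrow> bump 0 x = 0"
  by (auto simp: bump_0 exp_bump_def)

lemma test_fun_within_bump: "test_fun_within bump 1"
  by (rule test_fun_withinI[OF smooth_seq_bump]) (simp add: bump_eq_0)

definition bump_cdf :: "real \<Rightarrow> real" where "bump_cdf = primitive (-1) (bump 0)"

lemma bump_cdf_has_derivative: "(bump_cdf has_real_derivative bump 0 x) (at x)"
  unfolding bump_cdf_def by (rule primitive_has_derivative[OF smooth_seq_continuous[OF smooth_seq_bump]])

lemma bump_cdf_eq_0: "x \<le> -1 \<Longrightarrow> bump_cdf x = 0"
proof -
  assume x: "x \<le> -1"
  have "integral {x..-1} (bump 0) = integral {x..-1} (\<lambda>_. 0)"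
    by (rule integral_cong) (auto simp: bump_eq_0)
  then show ?thesis using x by (simp add: bump_cdf_def primitive_def)
qed

lemma continuous_on_bump_cdf: "continuous_on S bump_cdf"
  by (meson DERIV_isCont bump_cdf_has_derivative continuous_at_imp_continuous_on)

lemma bump_cdf_mono: "x \<le> y \<Longrightarrow> bump_cdf x \<le> bump_cdf y"
  by (rule DERIV_nonneg_imp_increasing_open[of x y bump_cdf])
     (use bump_cdf_has_derivative bump_nonneg continuous_on_bump_cdf in auto)

lemma bump_cdf_const: "1 \<le> x \<Longrightarrow> bump_cdf x = bump_cdf 1"
proof -
  assume x: "1 \<le> x"
  have d: "(bump_cdf has_real_derivative 0) (at y)" if "1 < y" for y
    using bump_cdf_has_derivative[of y] bump_eq_0[of y] that by simp
  show ?thesis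
  proof (cases "x = 1")
    case False
    then show ?thesis using DERIV_isconst2[of 1 x bump_cdf x, OF _ continuous_on_bump_cdf d] x by simp
  qed simp
qed

lemma bump_mass_pos: "bump_cdf 1 > 0"
proof -
  have "bump_cdf (-1) < bump_cdf 1"
  proof (rule DERIV_pos_imp_increasing_open[of "-1" 1 bump_cdf, OF _ _ continuous_on_bump_cdf])
    fix x :: real assume "-1 < x" "x < 1"
    then show "\<exists>y. (bump_cdf has_real_derivative y) (at x) \<and> y > 0"
      using bump_cdf_has_derivative[of x] bump_pos[of x] by (intro exI[of _ "bump 0 x"]) auto
  qed simp
  then show ?thesis using bump_cdf_eq_0 by simp
qed

definition smooth_step :: "nat \<Rightarrow> real \<Rightarrow> real" where
  "smooth_step k x = (if k = 0 then bump_cdf x / bump_cdf 1 else bump (k - 1) x / bump_cdf 1)"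

lemma smooth_seq_smooth_step: "smooth_seq smooth_step"
  unfolding smooth_seq_def
proof (intro allI)
  fix k x
  show "(smooth_step k has_real_derivative smooth_step (Suc k) x) (at x)"
  proof (cases k)
    case 0
    have "((\<lambda>x. bump_cdf x / bump_cdf 1) has_real_derivative bump 0 x / bump_cdf 1) (at x)"
      using bump_cdf_has_derivative[of x] by (rule DERIV_cdivide)
    moreover have "smooth_step 0 = (\<lambda>x. bump_cdf x / bump_cdf 1)" by (simp add: smooth_step_def fun_eq_iff)
    ultimately show ?thesis using 0 by (simp add: smooth_step_def)
  next
    case (Suc j)
    have "((\<lambda>x. bump j x / bump_cdf 1) has_real_derivative bump (Suc j) x / bump_cdf 1) (at x)"
      using smooth_seq_bump unfolding smooth_seq_def by (intro DERIV_cdivide) blast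
    moreover have "smooth_step (Suc j) = (\<lambda>x. bump j x / bump_cdf 1)" by (simp add: smooth_step_def fun_eq_iff)
    ultimately show ?thesis using Suc by (simp add: smooth_step_def)
  qed
qed

lemma smooth_step_eq_0: "x \<le> -1 \<Longrightarrow> smooth_step 0 x = 0"
  by (simp add: smooth_step_def bump_cdf_eq_0)

lemma smooth_step_eq_1: "1 \<le> x \<Longrightarrow> smooth_step 0 x = 1"
proof -
  assume "1 \<le> x"
  then have "bump_cdf x = bump_cdf 1" by (rule bump_cdf_const)
  then show ?thesis using bump_mass_pos by (simp add: smooth_step_def)
qed

lemma smooth_step_bounds: "0 \<le> smooth_step 0 x \<and> smooth_step 0 x \<le> 1"
proof -
  have "bump_cdf (min x (-1)) \<le> bump_cdf x" "bump_cdf x \<le> bump_cdf (max x 1)" by (auto intro!: bump_cdf_mono)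
  moreover have "bump_cdf (min x (-1)) = 0" by (simp add: bump_cdf_eq_0)
  moreover have "bump_cdf (max x 1) = bump_cdf 1" by (rule bump_cdf_const) simp
  ultimately show ?thesis using bump_mass_pos by (simp add: smooth_step_def divide_le_eq_1)
qed

definition plateau :: "real \<Rightarrow> real \<Rightarrow> real \<Rightarrow> nat \<Rightarrow> real \<Rightarrow> real" where
  "plateau n a b = seq_mult (\<lambda>k x. n ^ k * smooth_step k (n * x + (- n * a - 1)))
     (\<lambda>k x. (- n) ^ k * smooth_step k ((- n) * x + (n * b - 1)))"

lemma plateau_0: "plateau n a b 0 x = smooth_step 0 (n * x + (- n * a - 1)) * smooth_step 0 ((- n) * x + (n * b - 1))"
  by (simp add: plateau_def seq_mult_0)

lemma plateau_outside: "n \<ge> 0 \<Longrightarrow> x \<le> a \<or> b \<le> x \<Longrightarrow> plateau n a b 0 x = 0"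
proof -
  assume n: "n \<ge> 0" and x: "x \<le> a \<or> b \<le> x"
  show ?thesis
  proof (cases "x \<le> a")
    case True
    have "n * x \<le> n * a" using n True by (simp add: mult_left_mono)
    then show ?thesis by (simp add: plateau_0 smooth_step_eq_0)
  next
    case False
    then have "b \<le> x" using x by auto
    then have "n * b \<le> n * x" using n by (simp add: mult_left_mono)
    then show ?thesis by (simp add: plateau_0 smooth_step_eq_0)
  qed
qed

lemma test_fun_within_plateau:
  assumes n: "n \<ge> 0" shows "test_fun_within (plateau n a b) (max \<bar>a\<bar> \<bar>b\<bar>)"
proof (rule test_fun_withinI)
  show "smooth_seq (plateau n a b)" unfolding plateau_def by (intro smooth_seq_mult smooth_seq_affine smooth_seq_smooth_step)
  fix x assume x: "max \<bar>a\<bar> \<bar>b\<bar> < \<bar>x\<bar>"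
  then have "x \<le> a \<or> b \<le> x" by (auto simp: abs_if split: if_splits)
  then show "plateau n a b 0 x = 0" using plateau_outside[OF n] by blast
qed

lemma plateau_bounds: "0 \<le> plateau n a b 0 x \<and> plateau n a b 0 x \<le> 1"
  using smooth_step_bounds[of "n * x + (- n * a - 1)"] smooth_step_bounds[of "(- n) * x + (n * b - 1)"]
  by (simp add: plateau_0 mult_le_one)

lemma plateau_tendsto_1:
  assumes "a < x" "x < b"
  shows "(\<lambda>i. plateau (real (Suc i)) a b 0 x) \<longlonglongrightarrow> 1"
proof -
  obtain N :: nat where N: "2 / min (x - a) (b - x) < real N" using reals_Archimedean2 by blast
  have "eventually (\<lambda>i. plateau (real (Suc i)) a b 0 x = 1) sequentially"
    unfolding eventually_sequentially
  proof (intro exI allI impI)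
    fix i assume "N \<le> i"
    then have i: "2 / min (x - a) (b - x) < real (Suc i)" using N by linarith
    have m: "min (x - a) (b - x) > 0" using assms by auto
    then have i2: "2 < real (Suc i) * min (x - a) (b - x)" using i by (simp add: field_simps)
    have "2 \<le> real (Suc i) * (x - a)" "2 \<le> real (Suc i) * (b - x)"
      using i2 by (smt (verit) min.cobounded1 min.cobounded2 mult_left_mono of_nat_0_le_iff)+
    then show "plateau (real (Suc i)) a b 0 x = 1"
      by (simp add: plateau_0 smooth_step_eq_1 algebra_simps)
  qed
  then show ?thesis by (rule tendsto_eventually)
qed

lemma integral_bump: "(LINT x|lborel. bump 0 x) = bump_cdf 1"
proof -
  have "integral {-2..2} (bump 0) = (LINT y|lborel. bump 0 y)"
    by (rule integral_test_fun_within_eq[OF test_fun_within_bump]) auto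
  moreover have "integral {-2..2} (bump 0) = integral {-2..-1} (bump 0) + integral {-1..2} (bump 0)"
    by (rule Henstock_Kurzweil_Integration.integral_combine[symmetric])
       (auto intro: integrable_continuous_real continuous_on_subset[OF smooth_seq_continuous[OF smooth_seq_bump]])
  moreover have "integral {-2..-1} (bump 0) = integral {-2..-1::real} (\<lambda>_. 0)"
    by (rule integral_cong) (auto simp: bump_eq_0)
  moreover have "bump_cdf 2 = bump_cdf 1" by (rule bump_cdf_const) simp
  ultimately show ?thesis by (simp add: bump_cdf_def primitive_def)
qed

section \<open>The fundamental lemma of the calculus of variations\<close>

text \<open>The plateau functions converge boundedly to the indicator of \<open>{a<..<b}\<close>.\<close>
lemma integral_Ioo_eq_0_if_orthogonal:
  assumes w: "locally_integrable w" and T: "\<forall>D. test_fun D \<longrightarrow> (LINT x|lborel. w x * D 0 x) = 0"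
  shows "(LINT x|lborel. w x * indicator {a<..<b} x) = 0"
proof -
  let ?s = "\<lambda>i x. w x * plateau (real (Suc i)) a b 0 x"
  have wm[measurable]: "w \<in> borel_measurable borel" using w by (simp add: locally_integrable_def)
  have plm[measurable]: "plateau (real (Suc i)) a b 0 \<in> borel_measurable borel" for i
    using test_fun_within_measurable[OF test_fun_within_plateau] by simp
  have iw: "integrable lborel (\<lambda>x. norm (indicator {a..b} x *\<^sub>R w x))"
    using w by (simp add: locally_integrable_def set_integrable_def)
  have "(\<lambda>i. LINT x|lborel. ?s i x) \<longlonglongrightarrow> (LINT x|lborel. w x * indicator {a<..<b} x)"
  proof (rule integral_dominated_convergence[OF _ _ iw])
    show "(\<lambda>x. w x * indicator {a<..<b} x) \<in> borel_measurable lborel" by measurable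
    show "?s i \<in> borel_measurable lborel" for i by measurable
    show "AE x in lborel. (\<lambda>i. ?s i x) \<longlonglongrightarrow> w x * indicator {a<..<b} x"
    proof (rule AE_I2)
      fix x show "(\<lambda>i. ?s i x) \<longlonglongrightarrow> w x * indicator {a<..<b} x"
      proof (cases "a < x \<and> x < b")
        case True
        then show ?thesis using tendsto_mult[OF tendsto_const[of "w x"] plateau_tendsto_1[of a x b]] by simp
      next
        case False
        then show ?thesis using plateau_outside[of "real (Suc _)" x a b] by (auto simp: indicator_def not_less)
      qed
    qed
    show "AE x in lborel. norm (?s i x) \<le> norm (indicator {a..b} x *\<^sub>R w x)" for i
    proof (rule AE_I2)
      fix x
      show "norm (?s i x) \<le> norm (indicator {a..b} x *\<^sub>R w x)"
      proof (cases "a < x \<and> x < b")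
        case True
        have "\<bar>plateau (real (Suc i)) a b 0 x\<bar> \<le> 1" using plateau_bounds[of "real (Suc i)" a b x] by simp
        then have "\<bar>w x\<bar> * \<bar>plateau (real (Suc i)) a b 0 x\<bar> \<le> \<bar>w x\<bar>" by (simp add: mult_left_le)
        then show ?thesis using True by (simp add: abs_mult indicator_def)
      next
        case False
        then show ?thesis using plateau_outside[of "real (Suc i)" x a b] by (auto simp: not_less)
      qed
    qed
  qed
  moreover have "(LINT x|lborel. ?s i x) = 0" for i
    using T test_fun_within_imp_test_fun[OF test_fun_within_plateau[of "real (Suc i)" a b]] by simp
  ultimately show ?thesis using LIMSEQ_unique[OF _ tendsto_const[of 0]] by simp
qed

lemma integral_Ioc_eq_0_if_orthogonal:
  assumes w: "locally_integrable w" and T: "\<forall>D. test_fun D \<longrightarrow> (LINT x|lborel. w x * D 0 x) = 0"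
  shows "(LINT x|lborel. w x * indicator {a<..b} x) = 0"
proof (cases "a < b")
  case True
  have "(LINT x|lborel. w x * indicator {a<..b} x) = (LINT x|lborel. w x * indicator {a<..<b} x)"
  proof (rule integral_cong_AE)
    show "(\<lambda>x. w x * indicator {a<..b} x) \<in> borel_measurable lborel"
      "(\<lambda>x. w x * indicator {a<..<b} x) \<in> borel_measurable lborel"
      using w by (auto simp: locally_integrable_def)
    show "AE x in lborel. w x * indicator {a<..b} x = w x * indicator {a<..<b} x"
      using AE_lborel_singleton[of b] by (rule AE_mp) (auto simp: indicator_def)
  qed
  then show ?thesis using integral_Ioo_eq_0_if_orthogonal[OF w T] by simp
qed simp

lemma Int_stable_Ioc: "Int_stable (range (\<lambda>(a, b). {a<..b::real}))"
  unfolding Int_stable_def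
proof (intro ballI)
  fix A B assume "A \<in> range (\<lambda>(a, b). {a<..b::real})" "B \<in> range (\<lambda>(a, b). {a<..b::real})"
  then obtain a b c d where AB: "A = {a<..b}" "B = {c<..d}" by auto
  have "{a<..b} \<inter> {c<..d} = {max a c<..min b d}" by auto
  then show "A \<inter> B \<in> range (\<lambda>(a, b). {a<..b::real})" unfolding AB by auto
qed

lemma emeasure_density_Ioc:
  fixes g :: "real \<Rightarrow> real"
  assumes "g \<in> borel_measurable borel" "\<And>x. g x \<ge> 0" "integrable lborel (\<lambda>x. g x * indicator {a<..b} x)"
  shows "emeasure (density lborel (\<lambda>x. ennreal (g x))) {a<..b} = ennreal (LINT x|lborel. g x * indicator {a<..b} x)"
proof -
  have "emeasure (density lborel (\<lambda>x. ennreal (g x))) {a<..b} = (\<integral>\<^sup>+ x. ennreal (g x) * indicator {a<..b} x \<partial>lborel)"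
    using assms greaterThanAtMost_borel[of a b] by (intro emeasure_density) auto
  also have "\<dots> = (\<integral>\<^sup>+ x. ennreal (g x * indicator {a<..b} x) \<partial>lborel)"
    by (auto intro!: nn_integral_cong simp: indicator_def)
  also have "\<dots> = ennreal (LINT x|lborel. g x * indicator {a<..b} x)"
    using assms by (intro nn_integral_eq_integral) auto
  finally show ?thesis .
qed

lemma AE_eq_if_integrals_Ioc_eq:
  fixes g h :: "real \<Rightarrow> real"
  assumes [measurable]: "g \<in> borel_measurable borel" "h \<in> borel_measurable borel"
    and nonneg: "\<And>x. g x \<ge> 0" "\<And>x. h x \<ge> 0"
    and ig: "\<And>a b. integrable lborel (\<lambda>x. g x * indicator {a<..b} x)"
    and ih: "\<And>a b. integrable lborel (\<lambda>x. h x * indicator {a<..b} x)"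
    and eq: "\<And>a b. (LINT x|lborel. g x * indicator {a<..b} x) = (LINT x|lborel. h x * indicator {a<..b} x)"
  shows "AE x in lborel. g x = h x"
proof -
  note em = emeasure_density_Ioc[OF _ _ ig] emeasure_density_Ioc[OF _ _ ih]
  have sb: "sets (borel::real measure) = sigma_sets UNIV (range (\<lambda>(a, b). {a<..b::real}))"
    by (subst borel_sigma_sets_Ioc) (simp add: sets_measure_of)
  have "density lborel (\<lambda>x. ennreal (g x)) = density lborel (\<lambda>x. ennreal (h x))"
  proof (rule measure_eqI_generator_eq[OF Int_stable_Ioc, of UNIV _ _ "\<lambda>i. {- real i<..real i}"])
    show "emeasure (density lborel (\<lambda>x. ennreal (g x))) X = emeasure (density lborel (\<lambda>x. ennreal (h x))) X"
      if "X \<in> range (\<lambda>(a, b). {a<..b})" for X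
      using that em eq nonneg by auto
    show "(\<Union>i. {- real i<..real i}) = UNIV"
    proof (intro set_eqI iffI)
      fix x :: real
      obtain n :: nat where "\<bar>x\<bar> < real n" using reals_Archimedean2 by blast
      then show "x \<in> (\<Union>i. {- real i<..real i})" by (auto intro!: exI[of _ n])
    qed auto
    show "emeasure (density lborel (\<lambda>x. ennreal (g x))) {- real i<..real i} \<noteq> \<infinity>" for i
      using em nonneg by simp
  qed (use sb in auto)
  then have "AE x in lborel. ennreal (g x) = ennreal (h x)"
    by (rule sigma_finite_measure.density_unique[OF sigma_finite_lborel, rotated 2]) auto
  then show ?thesis
    by (rule AE_mp) (use nonneg in \<open>auto intro!: AE_I2\<close>)
qed

lemma fundamental_lemma_variations:
  assumes w: "locally_integrable w" and T: "\<forall>D. test_fun D \<longrightarrow> (LINT x|lborel. w x * D 0 x) = 0"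
  shows "AE x in lborel. w x = 0"
proof -
  define wp where "wp x = max (w x) 0" for x
  define wn where "wn x = max (- w x) 0" for x
  have wm[measurable]: "w \<in> borel_measurable borel" using w by (simp add: locally_integrable_def)
  have [measurable]: "wp \<in> borel_measurable borel" "wn \<in> borel_measurable borel"
    unfolding wp_def wn_def by measurable
  have ib: "integrable lborel (\<lambda>x. indicator {a..b} x *\<^sub>R w x)" for a b
    using w by (simp add: locally_integrable_def set_integrable_def)
  have ip: "integrable lborel (\<lambda>x. wp x * indicator {a<..b} x)" for a b
    by (rule Bochner_Integration.integrable_bound[OF ib[of a b]]) (auto simp: wp_def indicator_def)
  have inn: "integrable lborel (\<lambda>x. wn x * indicator {a<..b} x)" for a b
    by (rule Bochner_Integration.integrable_bound[OF ib[of a b]]) (auto simp: wn_def indicator_def)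
  have "AE x in lborel. wp x = wn x"
  proof (rule AE_eq_if_integrals_Ioc_eq[OF _ _ _ _ ip inn])
    fix a b
    have "w x * indicator {a<..b} x = wp x * indicator {a<..b} x - wn x * indicator {a<..b} x" for x
      by (auto simp: wp_def wn_def indicator_def)
    then show "(LINT x|lborel. wp x * indicator {a<..b} x) = (LINT x|lborel. wn x * indicator {a<..b} x)"
      using Bochner_Integration.integral_diff[OF ip inn] integral_Ioc_eq_0_if_orthogonal[OF w T, of a b]
      by simp
  qed (auto simp: wp_def wn_def)
  then show ?thesis
    by (rule AE_mp) (auto intro!: AE_I2 simp: wp_def wn_def max_def split: if_splits)
qed

definition primitive_seq :: "real \<Rightarrow> (nat \<Rightarrow> real \<Rightarrow> real) \<Rightarrow> nat \<Rightarrow> real \<Rightarrow> real" where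
  "primitive_seq N D k = (case k of 0 \<Rightarrow> primitive (-N) (D 0) | Suc j \<Rightarrow> D j)"

lemma test_fun_within_primitive_seq:
  assumes D: "test_fun_within D M" and z: "(LINT x|lborel. D 0 x) = 0"
  shows "test_fun_within (primitive_seq (\<bar>M\<bar> + 1) D) (\<bar>M\<bar> + 1)"
proof (rule test_fun_withinI)
  have c: "continuous_on UNIV (D 0)" using D by (intro smooth_seq_continuous) (auto simp: test_fun_within_def)
  show "smooth_seq (primitive_seq (\<bar>M\<bar> + 1) D)"
    unfolding smooth_seq_def
  proof (intro allI)
    fix k x show "(primitive_seq (\<bar>M\<bar> + 1) D k has_real_derivative primitive_seq (\<bar>M\<bar> + 1) D (Suc k) x) (at x)"
      using D primitive_has_derivative[OF c] by (cases k) (auto simp: primitive_seq_def test_fun_within_def smooth_seq_def)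
  qed
  fix x assume x: "\<bar>M\<bar> + 1 < \<bar>x\<bar>"
  show "primitive_seq (\<bar>M\<bar> + 1) D 0 x = 0"
  proof (cases "x < 0")
    case True
    then have "x \<le> - (\<bar>M\<bar> + 1)" using x by auto
    then have "integral {x..-(\<bar>M\<bar> + 1)} (D 0) = integral {x..-(\<bar>M\<bar> + 1)} (\<lambda>_. 0)"
      using D by (intro integral_cong) (auto simp: test_fun_within_def)
    then show ?thesis using True x by (simp add: primitive_seq_def primitive_def)
  next
    case False
    then show ?thesis using x integral_test_fun_within_eq[OF D, of "\<bar>M\<bar> + 1" x] z by (simp add: primitive_seq_def primitive_def)
  qed
qed

text \<open>\<open>D - r * bump\<close> has integral zero, hence its primitive is again a test function.\<close>
lemma test_fun_decomposition:
  assumes D: "test_fun_within D M"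
  shows "\<exists>F M'. test_fun_within F M' \<and> (\<forall>k x. D k x = F (Suc k) x + ((LINT x|lborel. D 0 x) / bump_cdf 1) * bump k x)"
proof -
  define r where "r = (LINT x|lborel. D 0 x) / bump_cdf 1"
  define M1 where "M1 = max M 1"
  define E where "E = (\<lambda>k x. 1 * D k x + (- r) * bump k x)"
  have tE: "test_fun_within E M1" unfolding E_def M1_def
    by (intro test_fun_within_lincomb test_fun_within_mono[OF D] test_fun_within_mono[OF test_fun_within_bump]) auto
  have "(LINT x|lborel. E 0 x) = (LINT x|lborel. D 0 x) - r * (LINT x|lborel. bump 0 x)"
    unfolding E_def using integrable_test_fun_within[OF D] integrable_test_fun_within[OF test_fun_within_bump]
    by simp
  also have "\<dots> = 0" unfolding r_def integral_bump using bump_mass_pos by simp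
  finally have z: "(LINT x|lborel. E 0 x) = 0" .
  show ?thesis
  proof (intro exI conjI allI)
    show "test_fun_within (primitive_seq (\<bar>M1\<bar> + 1) E) (\<bar>M1\<bar> + 1)" by (rule test_fun_within_primitive_seq[OF tE z])
    fix k x show "D k x = primitive_seq (\<bar>M1\<bar> + 1) E (Suc k) x + ((LINT x|lborel. D 0 x) / bump_cdf 1) * bump k x"
      by (simp add: primitive_seq_def E_def r_def)
  qed
qed

lemma AE_const_if_orthogonal_derivatives:
  assumes v: "locally_integrable v" and T: "\<forall>D. test_fun D \<longrightarrow> (LINT x|lborel. v x * D (Suc 0) x) = 0"
  shows "\<exists>c. AE x in lborel. v x = c"
proof -
  define c where "c = (LINT x|lborel. v x * bump 0 x) / bump_cdf 1"
  have "AE x in lborel. v x - c = 0"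
  proof (rule fundamental_lemma_variations)
    show "locally_integrable (\<lambda>x. v x - c)"
      using locally_integrable_lincomb[OF v continuous_imp_locally_integrable[of "\<lambda>_. 1"], of 1 "-c"] by simp
    show "\<forall>D. test_fun D \<longrightarrow> (LINT x|lborel. (v x - c) * D 0 x) = 0"
    proof (intro allI impI)
      fix D assume "test_fun D"
      then obtain M where D: "test_fun_within D M" using test_fun_imp_within by blast
      obtain F M' where F: "test_fun_within F M'" and dec: "\<And>k x. D k x = F (Suc k) x + ((LINT x|lborel. D 0 x) / bump_cdf 1) * bump k x"
        using test_fun_decomposition[OF D] by blast
      let ?r = "(LINT x|lborel. D 0 x) / bump_cdf 1"
      have iF: "integrable lborel (\<lambda>x. v x * F (Suc 0) x)" by (rule integrable_mult_test[OF v F])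
      have ith: "integrable lborel (\<lambda>x. v x * bump 0 x)" by (rule integrable_mult_test[OF v test_fun_within_bump])
      have iD: "integrable lborel (\<lambda>x. v x * D 0 x)" by (rule integrable_mult_test[OF v D])
      have "(LINT x|lborel. v x * D 0 x) = (LINT x|lborel. v x * F (Suc 0) x + ?r * (v x * bump 0 x))"
        by (subst dec) (simp add: algebra_simps)
      also have "\<dots> = (LINT x|lborel. v x * F (Suc 0) x) + ?r * (LINT x|lborel. v x * bump 0 x)"
        using iF ith by simp
      also have "(LINT x|lborel. v x * F (Suc 0) x) = 0" using T test_fun_within_imp_test_fun[OF F] by blast
      finally have e: "(LINT x|lborel. v x * D 0 x) = c * (LINT x|lborel. D 0 x)"
        by (simp add: c_def)
      have "(LINT x|lborel. (v x - c) * D 0 x) = (LINT x|lborel. v x * D 0 x) - c * (LINT x|lborel. D 0 x)"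
        using iD integrable_test_fun_within[OF D] by (simp add: algebra_simps)
      then show "(LINT x|lborel. (v x - c) * D 0 x) = 0" using e by simp
    qed
  qed
  then show ?thesis by auto
qed

lemma du_bois_reymond:
  assumes w: "locally_integrable w" and h: "locally_integrable h"
    and T: "\<forall>D. test_fun D \<longrightarrow> (LINT x|lborel. w x * D (Suc 0) x) = - (LINT x|lborel. h x * D 0 x)"
  shows "\<exists>c. AE x in lborel. w x = primitive 0 h x + c"
proof -
  have lp: "locally_integrable (primitive 0 h)" by (rule continuous_imp_locally_integrable[OF continuous_on_primitive[OF h]])
  have "\<exists>c. AE x in lborel. w x - primitive 0 h x = c"
  proof (rule AE_const_if_orthogonal_derivatives)
    show "locally_integrable (\<lambda>x. w x - primitive 0 h x)" using locally_integrable_lincomb[OF w lp, of 1 "-1"] by simp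
    show "\<forall>D. test_fun D \<longrightarrow> (LINT x|lborel. (w x - primitive 0 h x) * D (Suc 0) x) = 0"
    proof (intro allI impI)
      fix D assume tD: "test_fun D"
      then obtain M where D: "test_fun_within D M" using test_fun_imp_within by blast
      have "(LINT x|lborel. (w x - primitive 0 h x) * D (Suc 0) x)
          = (LINT x|lborel. w x * D (Suc 0) x) - (LINT x|lborel. primitive 0 h x * D (Suc 0) x)"
        unfolding left_diff_distrib
        by (rule Bochner_Integration.integral_diff[OF integrable_mult_test[OF w D] integrable_mult_test[OF lp D]])
      then show "(LINT x|lborel. (w x - primitive 0 h x) * D (Suc 0) x) = 0"
        using T tD integration_by_parts_primitive[OF h D] by simp
    qed
  qed
  then obtain c where "AE x in lborel. w x - primitive 0 h x = c" by blast
  then have "AE x in lborel. w x = primitive 0 h x + c" by (rule AE_mp) (auto intro!: AE_I2)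
  then show ?thesis by blast
qed

lemma AE_affine_if_orthogonal_second_derivatives:
  assumes v: "locally_integrable v" and T: "\<And>D M. test_fun_within D M \<Longrightarrow> (LINT x|lborel. v x * D 2 x) = 0"
  shows "\<exists>m c. AE x in lborel. v x = m * x + c"
proof -
  txt \<open>The distributional derivative of \<open>v\<close> is constant; its value is read off by testing
    against the bump function.\<close>
  define m where "m = (LINT x|lborel. v x * bump (Suc 0) x) / bump_cdf 1"
  have "\<exists>c. AE x in lborel. v x = primitive 0 (\<lambda>_. - m) x + c"
  proof (rule du_bois_reymond[OF v continuous_imp_locally_integrable])
    show "\<forall>D. test_fun D \<longrightarrow> (LINT x|lborel. v x * D (Suc 0) x) = - (LINT x|lborel. - m * D 0 x)"
    proof (intro allI impI)
      fix D assume "test_fun D"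
      then obtain M where D: "test_fun_within D M" using test_fun_imp_within by blast
      obtain F M' where F: "test_fun_within F M'"
        and dec: "\<And>k x. D k x = F (Suc k) x + ((LINT x|lborel. D 0 x) / bump_cdf 1) * bump k x"
        using test_fun_decomposition[OF D] by blast
      let ?r = "(LINT x|lborel. D 0 x) / bump_cdf 1"
      have "(LINT x|lborel. v x * D (Suc 0) x) = (LINT x|lborel. v x * F 2 x + ?r * (v x * bump (Suc 0) x))"
        by (subst dec) (simp add: algebra_simps numeral_2_eq_2)
      also have "\<dots> = (LINT x|lborel. v x * F 2 x) + ?r * (LINT x|lborel. v x * bump (Suc 0) x)"
        using integrable_mult_test[OF v F] integrable_mult_test[OF v test_fun_within_bump] by simp
      also have "(LINT x|lborel. v x * F 2 x) = 0" by (rule T[OF F])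
      finally show "(LINT x|lborel. v x * D (Suc 0) x) = - (LINT x|lborel. - m * D 0 x)"
        by (simp add: m_def)
    qed
  qed simp
  then obtain c where "AE x in lborel. v x = - m * x + c" by (auto simp: primitive_const)
  then show ?thesis by blast
qed

lemma du_bois_reymond_2:
  assumes w: "locally_integrable w" and g: "locally_integrable g"
    and T: "\<forall>D. test_fun D \<longrightarrow> (LINT x|lborel. w x * D 2 x) = (LINT x|lborel. g x * D 0 x)"
  shows "\<exists>c0 c1. AE x in lborel. w x = primitive 0 (primitive 0 g) x + c1 * x + c0"
proof -
  define G where "G = primitive 0 g"
  define K where "K = primitive 0 G"
  have lG: "locally_integrable G"
    unfolding G_def by (rule continuous_imp_locally_integrable[OF continuous_on_primitive[OF g]])
  have lK: "locally_integrable K"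
    unfolding K_def by (rule continuous_imp_locally_integrable[OF continuous_on_primitive[OF lG]])
  have "\<exists>m c. AE x in lborel. w x - K x = m * x + c"
  proof (rule AE_affine_if_orthogonal_second_derivatives)
    show "locally_integrable (\<lambda>x. w x - K x)" using locally_integrable_lincomb[OF w lK, of 1 "-1"] by simp
    fix D M assume D: "test_fun_within D M"
    have "(LINT x|lborel. K x * D 2 x) = - (LINT x|lborel. G x * D (Suc 0) x)"
      using integration_by_parts_primitive[OF lG test_fun_within_shift[OF D], of 0]
      by (simp add: K_def numeral_2_eq_2)
    also have "\<dots> = (LINT x|lborel. g x * D 0 x)"
      using integration_by_parts_primitive[OF g D, of 0] by (simp add: G_def)
    finally have "(LINT x|lborel. K x * D 2 x) = (LINT x|lborel. g x * D 0 x)" .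
    moreover have "(LINT x|lborel. (w x - K x) * D 2 x) = (LINT x|lborel. w x * D 2 x) - (LINT x|lborel. K x * D 2 x)"
      unfolding left_diff_distrib
      by (rule Bochner_Integration.integral_diff[OF integrable_mult_test[OF w D] integrable_mult_test[OF lK D]])
    ultimately show "(LINT x|lborel. (w x - K x) * D 2 x) = 0" using T test_fun_within_imp_test_fun[OF D] by simp
  qed
  then obtain m c where "AE x in lborel. w x - K x = m * x + c" by blast
  then have "AE x in lborel. w x = primitive 0 (primitive 0 g) x + m * x + c"
    by (rule AE_mp) (auto simp: K_def G_def intro!: AE_I2)
  then show ?thesis by blast
qed

section \<open>Regularity of weak solutions\<close>

lemma test_fun_within_shift_by:
  "test_fun_within D M \<Longrightarrow> test_fun_within (\<lambda>j. D (j + k)) M"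
  by (induction k) (auto dest: test_fun_within_shift)

lemma weak_deriv_test:
  assumes "weak_deriv u v" "test_fun_within D M"
  shows "(LINT x|lborel. u x * D (Suc k) x) = - (LINT x|lborel. v x * D k x)"
  using assms(1)[unfolded weak_deriv_def, rule_format,
      OF test_fun_within_imp_test_fun[OF test_fun_within_shift_by[OF assms(2), of k]]]
  by simp

lemma L2_cong_AE:
  assumes "L2 u" "v \<in> borel_measurable borel" "AE x in lborel. u x = v x"
  shows "L2 v"
  using assms unfolding L2_def
  by (auto intro: integrable_cong_AE_imp[where g="\<lambda>x. (u x)\<^sup>2"] elim: AE_mp)

lemma H2_continuous_representative:
  assumes L: "L2 \<phi>" "L2 u1" "L2 u2" and wd1: "weak_deriv \<phi> u1" and wd2: "weak_deriv u1 u2"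
  obtains P U1 c1 where "\<And>x. (P has_real_derivative U1 x) (at x)" "\<And>x. U1 x = primitive 0 u2 x + c1"
    "AE x in lborel. \<phi> x = P x" "AE x in lborel. u1 x = U1 x"
proof -
  have l0: "locally_integrable \<phi>" and l1: "locally_integrable u1" and l2: "locally_integrable u2"
    using L L2_imp_locally_integrable by auto
  obtain c1 where R1: "AE x in lborel. u1 x = primitive 0 u2 x + c1"
    using du_bois_reymond[OF l1 l2] wd2 unfolding weak_deriv_def by auto
  define U1 where "U1 x = primitive 0 u2 x + c1" for x
  have cU1: "continuous_on UNIV U1" unfolding U1_def by (intro continuous_intros continuous_on_primitive[OF l2])
  obtain c0 where R0: "AE x in lborel. \<phi> x = primitive 0 u1 x + c0"
    using du_bois_reymond[OF l0 l1] wd1 unfolding weak_deriv_def by auto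
  have "primitive 0 u1 = primitive 0 U1"
    by (rule primitive_cong_AE[OF l1 continuous_imp_locally_integrable[OF cU1]]) (use R1 in \<open>simp add: U1_def\<close>)
  then have "AE x in lborel. \<phi> x = primitive 0 U1 x + c0" using R0 by simp
  moreover have "((\<lambda>x. primitive 0 U1 x + c0) has_real_derivative U1 x) (at x)" for x
    by (auto intro!: derivative_eq_intros primitive_has_derivative[OF cU1])
  ultimately show thesis using that[of "\<lambda>x. primitive 0 U1 x + c0" U1 c1] R1 by (simp add: U1_def)
qed

lemma weak_solution_tested:
  assumes W: "weak_solution c \<beta> f \<phi>" and wd1: "weak_deriv \<phi> u1" and wd2: "weak_deriv u1 u2"
    and l0: "locally_integrable \<phi>" and l2: "locally_integrable u2" and D: "test_fun_within D M"
  shows "(LINT x|lborel. u2 x * D 2 x) = (c\<^sup>2 - 1) * (LINT x|lborel. \<phi> x * D 0 x)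
           - \<beta> * (LINT x|lborel. u2 x * D 0 x) + (LINT x|lborel. f (\<phi> x) * D 0 x)"
proof -
  have I4: "(LINT x|lborel. \<phi> x * D 4 x) = (LINT x|lborel. u2 x * D 2 x)"
    using weak_deriv_test[OF wd1 D, of 3] weak_deriv_test[OF wd2 D, of 2] by (simp add: numeral_eq_Suc)
  have I2: "(LINT x|lborel. \<phi> x * D 2 x) = (LINT x|lborel. u2 x * D 0 x)"
    using weak_deriv_test[OF wd1 D, of 1] weak_deriv_test[OF wd2 D, of 0] by (simp add: numeral_eq_Suc)
  define S where "S x = (1 - c\<^sup>2) * \<phi> x * D 0 x + \<beta> * \<phi> x * D 2 x + \<phi> x * D 4 x - f (\<phi> x) * D 0 x" for x
  have iS: "integrable lborel S" and S0: "(LINT x|lborel. S x) = 0"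
    using W test_fun_within_imp_test_fun[OF D] unfolding weak_solution_def S_def[abs_def] by auto
  have i0: "integrable lborel (\<lambda>x. \<phi> x * D k x)" for k by (rule integrable_mult_test[OF l0 D])
  have ef: "f (\<phi> x) * D 0 x = (1 - c\<^sup>2) * (\<phi> x * D 0 x) + \<beta> * (\<phi> x * D 2 x) + \<phi> x * D 4 x - S x" for x
    by (simp add: S_def algebra_simps)
  have iF: "integrable lborel (\<lambda>x. f (\<phi> x) * D 0 x)"
    unfolding ef using i0 iS by (intro Bochner_Integration.integrable_diff Bochner_Integration.integrable_add integrable_mult_right) auto
  have "S = (\<lambda>x. (1 - c\<^sup>2) * (\<phi> x * D 0 x) + \<beta> * (\<phi> x * D 2 x) + \<phi> x * D 4 x - f (\<phi> x) * D 0 x)"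
    by (simp add: S_def fun_eq_iff algebra_simps)
  then have "0 = (1 - c\<^sup>2) * (LINT x|lborel. \<phi> x * D 0 x) + \<beta> * (LINT x|lborel. \<phi> x * D 2 x)
        + (LINT x|lborel. \<phi> x * D 4 x) - (LINT x|lborel. f (\<phi> x) * D 0 x)"
    using S0 i0 iF by simp
  then show ?thesis using I4 I2 by (simp add: algebra_simps)
qed

lemma weak_solution_second_order:
  assumes W: "weak_solution c \<beta> f \<phi>" and wd1: "weak_deriv \<phi> u1" and wd2: "weak_deriv u1 u2"
    and l0: "locally_integrable \<phi>" and l2: "locally_integrable u2"
    and cP: "continuous_on UNIV P" and fc: "continuous_on UNIV f" and R0: "AE x in lborel. \<phi> x = P x"
    and tD: "test_fun D"
  shows "(LINT x|lborel. u2 x * D 2 x) = (LINT x|lborel. ((c\<^sup>2 - 1) * P x - \<beta> * u2 x + f (P x)) * D 0 x)"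
proof -
  obtain M where D: "test_fun_within D M" using test_fun_imp_within[OF tD] by blast
  have cfP: "continuous_on UNIV (\<lambda>x. f (P x))" by (rule continuous_on_compose2[OF fc cP]) auto
  have [measurable]: "\<phi> \<in> borel_measurable borel" "f \<in> borel_measurable borel" "P \<in> borel_measurable borel"
    "D 0 \<in> borel_measurable borel"
    using l0 fc cP test_fun_within_measurable[OF D]
    by (auto simp: locally_integrable_def intro: borel_measurable_continuous_onI)
  have "(LINT x|lborel. \<phi> x * D 0 x) = (LINT x|lborel. P x * D 0 x)"
    "(LINT x|lborel. f (\<phi> x) * D 0 x) = (LINT x|lborel. f (P x) * D 0 x)"
    using R0 by (auto intro!: integral_cong_AE elim: AE_mp)
  moreover have "(LINT x|lborel. ((c\<^sup>2 - 1) * P x - \<beta> * u2 x + f (P x)) * D 0 x)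
      = (c\<^sup>2 - 1) * (LINT x|lborel. P x * D 0 x) - \<beta> * (LINT x|lborel. u2 x * D 0 x)
        + (LINT x|lborel. f (P x) * D 0 x)"
  proof -
    have "(\<lambda>x. ((c\<^sup>2 - 1) * P x - \<beta> * u2 x + f (P x)) * D 0 x)
        = (\<lambda>x. (c\<^sup>2 - 1) * (P x * D 0 x) - \<beta> * (u2 x * D 0 x) + f (P x) * D 0 x)"
      by (simp add: fun_eq_iff algebra_simps)
    then show ?thesis
      using integrable_mult_test[OF continuous_imp_locally_integrable[OF cP] D, of 0]
        integrable_mult_test[OF l2 D, of 0] integrable_mult_test[OF continuous_imp_locally_integrable[OF cfP] D, of 0]
      by simp
  qed
  ultimately show ?thesis using weak_solution_tested[OF W wd1 wd2 l0 l2 D] by simp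
qed

locale classical_solution =
  fixes a \<beta> :: real and f P P1 P2 P3 :: "real \<Rightarrow> real"
  assumes P_deriv: "\<And>x. (P has_real_derivative P1 x) (at x)"
    and P1_deriv: "\<And>x. (P1 has_real_derivative P2 x) (at x)"
    and P2_deriv: "\<And>x. (P2 has_real_derivative P3 x) (at x)"
    and P3_deriv: "\<And>x. (P3 has_real_derivative (a * P x - \<beta> * P2 x + f (P x))) (at x)"
    and L2_P: "L2 P" and L2_P1: "L2 P1" and L2_P2: "L2 P2"

lemma weak_solution_classical:
  fixes \<phi> f :: "real \<Rightarrow> real"
  assumes H: "H2 \<phi>" and W: "weak_solution c \<beta> f \<phi>" and fc: "continuous_on UNIV f"
  obtains P P1 P2 P3 where "classical_solution (c\<^sup>2 - 1) \<beta> f P P1 P2 P3" "AE x in lborel. \<phi> x = P x"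
proof -
  define a where "a = c\<^sup>2 - 1"
  obtain u1 u2 where L: "L2 \<phi>" "L2 u1" "L2 u2" and wd1: "weak_deriv \<phi> u1" and wd2: "weak_deriv u1 u2"
    using H unfolding H2_def by blast
  have l0: "locally_integrable \<phi>" and l2: "locally_integrable u2"
    using L L2_imp_locally_integrable by auto
  obtain P U1 c1 where dP: "\<And>x. (P has_real_derivative U1 x) (at x)" and U1: "\<And>x. U1 x = primitive 0 u2 x + c1"
    and R0: "AE x in lborel. \<phi> x = P x" and R1: "AE x in lborel. u1 x = U1 x"
    using H2_continuous_representative[OF L wd1 wd2] by blast
  have cP: "continuous_on UNIV P" by (meson DERIV_isCont continuous_at_imp_continuous_on dP)
  have cU1: "continuous_on UNIV U1" unfolding U1 by (intro continuous_intros continuous_on_primitive[OF l2])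
  have cfP: "continuous_on UNIV (\<lambda>x. f (P x))" by (rule continuous_on_compose2[OF fc cP]) auto
  define g where "g x = a * P x - \<beta> * u2 x + f (P x)" for x
  have lg: "locally_integrable g"
    using locally_integrable_lincomb[OF continuous_imp_locally_integrable[of "\<lambda>x. a * P x + f (P x)"] l2, of 1 "- \<beta>"]
    by (simp add: g_def[abs_def] algebra_simps continuous_intros cP cfP)
  have "(LINT x|lborel. u2 x * D 2 x) = (LINT x|lborel. g x * D 0 x)" if "test_fun D" for D
    using weak_solution_second_order[OF W wd1 wd2 l0 l2 cP fc R0 that] by (simp add: g_def a_def)
  then obtain e0 e1 where R2: "AE x in lborel. u2 x = primitive 0 (primitive 0 g) x + e1 * x + e0"
    using du_bois_reymond_2[OF l2 lg] by blast
  define U2 where "U2 x = primitive 0 (primitive 0 g) x + e1 * x + e0" for x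
  have cU2: "continuous_on UNIV U2" unfolding U2_def
    by (intro continuous_intros continuous_on_primitive continuous_imp_locally_integrable lg)
  txt \<open>Replacing \<open>u2\<close> by its continuous representative makes the right-hand side continuous.\<close>
  define gc where "gc x = a * P x - \<beta> * U2 x + f (P x)" for x
  have cgc: "continuous_on UNIV gc" unfolding gc_def
    by (intro continuous_intros cP cU2 cfP)
  have "primitive 0 g = primitive 0 gc"
    by (rule primitive_cong_AE[OF lg continuous_imp_locally_integrable[OF cgc]])
       (use R2 in \<open>auto simp: g_def gc_def U2_def elim!: AE_mp intro!: AE_I2\<close>)
  then have U2e: "U2 x = primitive 0 (primitive 0 gc) x + e1 * x + e0" for x by (simp add: U2_def)
  have "primitive 0 u2 = primitive 0 U2"
    by (rule primitive_cong_AE[OF l2 continuous_imp_locally_integrable[OF cU2]]) (use R2 in \<open>simp add: U2_def\<close>)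
  then have U1e: "U1 x = primitive 0 U2 x + c1" for x by (simp add: U1)
  have "classical_solution a \<beta> f P U1 U2 (\<lambda>x. primitive 0 gc x + e1)"
  proof
    show "(U1 has_real_derivative U2 x) (at x)" for x
      unfolding U1e[abs_def] by (auto intro!: derivative_eq_intros primitive_has_derivative[OF cU2])
    show "(U2 has_real_derivative (primitive 0 gc x + e1)) (at x)" for x
      unfolding U2e[abs_def]
      by (auto intro!: derivative_eq_intros primitive_has_derivative continuous_on_primitive
          continuous_imp_locally_integrable cgc)
    show "((\<lambda>x. primitive 0 gc x + e1) has_real_derivative a * P x - \<beta> * U2 x + f (P x)) (at x)" for x
      by (auto intro!: derivative_eq_intros primitive_has_derivative[OF cgc] simp: gc_def)
    show "L2 P" by (rule L2_cong_AE[OF L(1) _ R0]) (rule borel_measurable_continuous_onI[OF cP])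
    show "L2 U1" by (rule L2_cong_AE[OF L(2) _ R1]) (rule borel_measurable_continuous_onI[OF cU1])
    show "L2 U2" by (rule L2_cong_AE[OF L(3) _ R2[folded U2_def]]) (rule borel_measurable_continuous_onI[OF cU2])
  qed (rule dP)
  then show thesis using that R0 by (simp add: a_def)
qed

section \<open>Exact derivatives with integrable primitives\<close>

lemma abs_integral_indicator_le:
  assumes "integrable lborel (e :: real \<Rightarrow> real)" and Am: "A \<in> sets borel"
  shows "\<bar>LINT x|lborel. indicator A x * e x\<bar> \<le> (LINT x|lborel. \<bar>e x\<bar>)"
proof -
  have "\<bar>LINT x|lborel. indicator A x * e x\<bar> \<le> (LINT x|lborel. \<bar>indicator A x * e x\<bar>)"
    using integral_norm_bound[of lborel "\<lambda>x. indicator A x * e x"] by simp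
  also have "\<dots> \<le> (LINT x|lborel. \<bar>e x\<bar>)"
  proof (rule integral_mono)
    show "integrable lborel (\<lambda>x. \<bar>e x\<bar>)" using assms by simp
    have [measurable]: "e \<in> borel_measurable borel" using assms(1) by (simp add: borel_measurable_integrable)
    show "integrable lborel (\<lambda>x. \<bar>indicator A x * e x\<bar>)"
      by (rule Bochner_Integration.integrable_bound[OF integrable_abs[OF assms(1)]]) (use Am in \<open>auto simp: indicator_def\<close>)
  qed (auto simp: indicator_def)
  finally show ?thesis .
qed

lemma integrable_not_ge_on_ray:
  fixes g :: "real \<Rightarrow> real"
  assumes ig: "integrable lborel g" and c: "c > 0" and ge: "\<And>x. x \<ge> T \<Longrightarrow> c \<le> g x"
  shows False
proof -
  obtain n :: nat where n: "(LINT x|lborel. \<bar>g x\<bar>) < real n * c"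
    using reals_Archimedean3[OF c] by blast
  have "real n * c = (LINT x|lborel. indicator {T..T + real n} x * c)" by simp
  also have "\<dots> \<le> (LINT x|lborel. \<bar>g x\<bar>)"
  proof (rule integral_mono)
    show "integrable lborel (\<lambda>x. indicator {T..T + real n} x * c)"
      using integrable_indicator_iff[of lborel "{T..T + real n}"]
      by (intro integrable_mult_left) (simp add: emeasure_lborel_Icc_eq)
    show "integrable lborel (\<lambda>x. \<bar>g x\<bar>)" using ig by simp
    fix x show "indicator {T..T + real n} x * c \<le> \<bar>g x\<bar>" using ge[of x] c by (auto simp: indicator_def)
  qed
  finally show False using n by simp
qed

text \<open>\<open>s + primitive 0 e\<close> grows linearly while \<open>primitive 0 e\<close> stays bounded, so \<open>s\<close> cannot be
  integrable.\<close>
lemma derivative_plus_integrable_not_ge: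
  fixes s s1 e :: "real \<Rightarrow> real"
  assumes ds: "\<And>x. (s has_real_derivative s1 x) (at x)" and ce: "continuous_on UNIV e"
    and iS: "integrable lborel s" and ie: "integrable lborel e"
    and dl: "\<delta> > 0" and ge: "\<And>x. x \<ge> R0 \<Longrightarrow> s1 x + e x \<ge> \<delta>"
  shows False
proof -
  define Ie where "Ie = (LINT x|lborel. \<bar>e x\<bar>)"
  define W where "W x = s x + primitive 0 e x" for x
  have dW: "(W has_real_derivative s1 x + e x) (at x)" for x
    unfolding W_def by (intro DERIV_add ds primitive_has_derivative[OF ce])
  have cW: "continuous_on S W" for S
    by (meson DERIV_isCont continuous_at_imp_continuous_on dW)
  have mono: "W R0 - \<delta> * R0 \<le> W T - \<delta> * T" if "R0 \<le> T" for T
  proof (rule DERIV_nonneg_imp_increasing_open[of R0 T "\<lambda>x. W x - \<delta> * x", OF that])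
    fix x assume "R0 < x" "x < T"
    then show "\<exists>y. ((\<lambda>x. W x - \<delta> * x) has_real_derivative y) (at x) \<and> 0 \<le> y"
      using ge[of x] dW[of x] by (intro exI[of _ "s1 x + e x - \<delta>"]) (auto intro!: derivative_eq_intros)
  qed (intro continuous_intros cW)
  have le: "locally_integrable e" by (rule continuous_imp_locally_integrable[OF ce])
  have pb: "\<bar>primitive 0 e T\<bar> \<le> Ie" if "0 \<le> T" for T
  proof -
    have "primitive 0 e T = (LINT x:{0..T}|lborel. e x)" using that locally_integrable_integral_eq[OF le] by (simp add: primitive_def)
    also have "\<dots> = (LINT x|lborel. indicator {0..T} x * e x)" by (simp add: set_lebesgue_integral_def)
    finally show ?thesis using abs_integral_indicator_le[OF ie, of "{0..T}"] by (simp add: Ie_def)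
  qed
  define T1 where "T1 = max R0 0 + (\<bar>W R0 - \<delta> * R0\<bar> + Ie + 1) / \<delta>"
  have s1: "s T \<ge> 1" if "T \<ge> T1" for T
  proof -
    have Ie0: "Ie \<ge> 0" unfolding Ie_def by simp
    have "(\<bar>W R0 - \<delta> * R0\<bar> + Ie + 1) / \<delta> \<ge> 0" using Ie0 dl by simp
    then have "T \<ge> max R0 0" using that unfolding T1_def by linarith
    then have "W R0 - \<delta> * R0 \<le> W T - \<delta> * T" "\<bar>primitive 0 e T\<bar> \<le> Ie" using mono pb by auto
    moreover have "\<delta> * T \<ge> \<delta> * T1" using that dl by simp
    moreover have "\<delta> * T1 = \<delta> * max R0 0 + (\<bar>W R0 - \<delta> * R0\<bar> + Ie + 1)" using dl by (simp add: T1_def field_simps)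
    moreover have "\<delta> * max R0 0 \<ge> 0" using dl by simp
    ultimately show ?thesis unfolding W_def by linarith
  qed
  show False by (rule integrable_not_ge_on_ray[OF iS zero_less_one s1])
qed

lemma derivative_plus_integrable_not_le:
  fixes s s1 e :: "real \<Rightarrow> real"
  assumes ds: "\<And>x. (s has_real_derivative s1 x) (at x)" and ce: "continuous_on UNIV e"
    and iS: "integrable lborel s" and ie: "integrable lborel e"
    and dl: "\<delta> > 0" and ge: "\<And>x. x \<ge> R0 \<Longrightarrow> s1 x + e x \<le> - \<delta>"
  shows False
proof (rule derivative_plus_integrable_not_ge[of "\<lambda>x. - s x" "\<lambda>x. - s1 x" "\<lambda>x. - e x", OF _ _ _ _ dl])
  show "((\<lambda>x. - s x) has_real_derivative - s1 x) (at x)" for x using ds[of x] by (rule DERIV_minus)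
  show "continuous_on UNIV (\<lambda>x. - e x)" using ce by (intro continuous_intros)
  show "- s1 x + - e x \<ge> \<delta>" if "x \<ge> R0" for x using ge[OF that] by simp
qed (use iS ie in auto)

lemma derivative_plus_integrable_tendsto_0:
  fixes s s1 e :: "real \<Rightarrow> real"
  assumes ds: "\<And>x. (s has_real_derivative s1 x) (at x)" and ce: "continuous_on UNIV e"
    and iS: "integrable lborel s" and ie: "integrable lborel e"
    and lim: "((\<lambda>x. s1 x + e x) \<longlongrightarrow> k) at_top"
  shows "k = 0"
proof (rule ccontr)
  assume "k \<noteq> 0"
  then consider "k > 0" | "k < 0" by linarith
  then show False
  proof cases
    case 1
    then obtain R0 where "\<And>x. x \<ge> R0 \<Longrightarrow> s1 x + e x > k / 2"
      using order_tendstoD(1)[OF lim, of "k / 2"] by (auto simp: eventually_at_top_linorder)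
    then show False
      by (intro derivative_plus_integrable_not_ge[OF ds ce iS ie, of "k / 2" R0]) (use 1 in \<open>auto simp: less_imp_le\<close>)
  next
    case 2
    then obtain R0 where "\<And>x. x \<ge> R0 \<Longrightarrow> s1 x + e x < k / 2"
      using order_tendstoD(2)[OF lim, of "k / 2"] by (auto simp: eventually_at_top_linorder)
    then show False
      by (intro derivative_plus_integrable_not_le[OF ds ce iS ie, of "- k / 2" R0]) (use 2 in \<open>auto simp: less_imp_le\<close>)
  qed
qed

lemma derivative_plus_integrable_const_eq_0:
  fixes s s1 e :: "real \<Rightarrow> real"
  assumes "\<And>x. (s has_real_derivative s1 x) (at x)" "continuous_on UNIV e"
    and "integrable lborel s" "integrable lborel e" and "\<And>x. s1 x + e x = k"
  shows "k = 0"
  using derivative_plus_integrable_tendsto_0[OF assms(1-4)] assms(5) by simp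

lemma tendsto_integral_symmetric_Icc:
  fixes Q :: "real \<Rightarrow> real"
  assumes iQ: "integrable lborel Q"
  shows "((\<lambda>t. LINT x|lborel. indicator {-t..t} x * Q x) \<longlongrightarrow> (LINT x|lborel. Q x)) at_top"
proof -
  have [measurable]: "Q \<in> borel_measurable borel" using iQ by (simp add: borel_measurable_integrable)
  show ?thesis
  proof (rule integral_dominated_convergence_at_top[where w="\<lambda>x. \<bar>Q x\<bar>"])
    show "integrable lborel (\<lambda>x. \<bar>Q x\<bar>)" using iQ by simp
    show "AE x in lborel. ((\<lambda>t. indicator {-t..t} x * Q x) \<longlongrightarrow> Q x) at_top"
    proof (rule AE_I2)
      fix x :: real
      have "eventually (\<lambda>t. indicator {-t..t} x * Q x = Q x) at_top"
        using eventually_ge_at_top[of "\<bar>x\<bar>"] by (rule eventually_mono) (auto simp: indicator_def)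
      then show "((\<lambda>t. indicator {-t..t} x * Q x) \<longlongrightarrow> Q x) at_top"
        by (rule tendsto_eventually)
    qed
    show "\<forall>\<^sub>F i in at_top. AE x in lborel. norm (indicator {-i..i} x * Q x) \<le> \<bar>Q x\<bar>"
      by (auto simp: indicator_def)
  qed measurable
qed

lemma tendsto_symmetric_difference_integral:
  fixes V Q :: "real \<Rightarrow> real"
  assumes dV: "\<And>x. (V has_real_derivative Q x) (at x)" and cQ: "continuous_on UNIV Q"
    and iQ: "integrable lborel Q"
  shows "((\<lambda>t. V t - V (-t)) \<longlongrightarrow> (LINT x|lborel. Q x)) at_top"
  using tendsto_integral_symmetric_Icc[OF iQ]
proof (rule Lim_transform_eventually)
  have "(LINT x|lborel. indicator {-t..t} x * Q x) = V t - V (-t)" if "0 \<le> t" for t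
    using integral_FTC_atLeastAtMost[of "-t" t V Q] that dV cQ
    by (auto simp: has_real_derivative_iff_has_vector_derivative[symmetric]
             intro: has_field_derivative_at_within continuous_on_subset)
  then show "\<forall>\<^sub>F t in at_top. (LINT x|lborel. indicator {-t..t} x * Q x) = V t - V (-t)"
    using eventually_ge_at_top[of "0::real"] by (rule eventually_mono[rotated])
qed

text \<open>If \<open>V' = Q\<close> and \<open>V = s' + e\<close> with \<open>s, e\<close> integrable, then \<open>V t - V (-t)\<close> tends to the
  integral of \<open>Q\<close>, and the previous lemmas applied to \<open>s t + s (-t)\<close> show that the limit is zero.\<close>
lemma integral_derivative_eq_0:
  fixes V Q s s1 e :: "real \<Rightarrow> real"
  assumes dV: "\<And>x. (V has_real_derivative Q x) (at x)" and cQ: "continuous_on UNIV Q"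
    and iQ: "integrable lborel Q"
    and ds: "\<And>x. (s has_real_derivative s1 x) (at x)" and Vse: "\<And>x. V x = s1 x + e x"
    and iS: "integrable lborel s" and ie: "integrable lborel e" and ce: "continuous_on UNIV e"
  shows "(LINT x|lborel. Q x) = 0"
proof (rule derivative_plus_integrable_tendsto_0)
  show "((\<lambda>t. s t + s (-t)) has_real_derivative (s1 t - s1 (-t))) (at t)" for t
    using ds by (auto intro!: derivative_eq_intros DERIV_chain2[OF ds])
  show "continuous_on UNIV (\<lambda>t. e t - e (-t))"
    by (intro continuous_intros continuous_on_compose2[OF ce]) auto
  have reflect: "integrable lborel (\<lambda>x. g (- x))" if "integrable lborel g" for g :: "real \<Rightarrow> real"
    using lborel_integrable_real_affine[OF that, of "-1" 0] by simp
  show "integrable lborel (\<lambda>t. s t + s (-t))" "integrable lborel (\<lambda>t. e t - e (-t))"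
    using iS ie reflect[OF iS] reflect[OF ie] by simp_all
  show "((\<lambda>t. s1 t - s1 (-t) + (e t - e (-t))) \<longlongrightarrow> (LINT x|lborel. Q x)) at_top"
    using tendsto_symmetric_difference_integral[OF dV cQ iQ] by (simp add: Vse algebra_simps)
qed

lemma L2_integrable_mult:
  assumes "L2 u" "L2 v" shows "integrable lborel (\<lambda>x. u x * v x)"
proof -
  have [measurable]: "u \<in> borel_measurable borel" "v \<in> borel_measurable borel" using assms by (auto simp: L2_def)
  have i: "integrable lborel (\<lambda>x. (u x)\<^sup>2 + (v x)\<^sup>2)" using assms by (auto simp: L2_def)
  show ?thesis
  proof (rule Bochner_Integration.integrable_bound[OF i])
    show "AE x in lborel. norm (u x * v x) \<le> norm ((u x)\<^sup>2 + (v x)\<^sup>2)"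
    proof (rule AE_I2)
      fix x
      have "2 * \<bar>u x\<bar> * \<bar>v x\<bar> \<le> (u x)\<^sup>2 + (v x)\<^sup>2"
        using sum_squares_bound[of "\<bar>u x\<bar>" "\<bar>v x\<bar>"] by simp
      moreover have "0 \<le> \<bar>u x\<bar> * \<bar>v x\<bar>" by simp
      moreover have "0 \<le> (u x)\<^sup>2 + (v x)\<^sup>2" by simp
      ultimately show "norm (u x * v x) \<le> norm ((u x)\<^sup>2 + (v x)\<^sup>2)"
        by (simp only: real_norm_def abs_mult)
    qed
    show "(\<lambda>x. u x * v x) \<in> borel_measurable lborel" by measurable
  qed
qed

lemma sq_diff_le_H1_norm:
  assumes dP: "\<And>x. (P has_real_derivative P1 x) (at x)" and cP1: "continuous_on UNIV P1"
    and LP: "L2 P" and LP1: "L2 P1" and yx: "y \<le> x"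
  shows "\<bar>(P x)\<^sup>2 - (P y)\<^sup>2\<bar> \<le> (LINT x|lborel. (P x)\<^sup>2 + (P1 x)\<^sup>2)"
proof -
  have cP: "continuous_on UNIV P" by (meson DERIV_isCont continuous_at_imp_continuous_on dP)
  have d: "((\<lambda>x. (P x)\<^sup>2) has_real_derivative 2 * P x * P1 x) (at x)" for x
    using dP[of x] by (auto intro!: derivative_eq_intros)
  have F1: "(LINT t|lborel. indicator {y..x} t *\<^sub>R (2 * P t * P1 t)) = (P x)\<^sup>2 - (P y)\<^sup>2"
    using yx d
    by (intro integral_FTC_atLeastAtMost)
       (auto simp: has_real_derivative_iff_has_vector_derivative[symmetric]
             intro: has_field_derivative_at_within continuous_on_subset intro!: continuous_intros cP cP1)
  have i2: "integrable lborel (\<lambda>t. 2 * P t * P1 t)"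
    using L2_integrable_mult[OF LP LP1] by (simp add: mult.assoc)
  have "\<bar>LINT t|lborel. indicator {y..x} t * (2 * P t * P1 t)\<bar> \<le> (LINT t|lborel. \<bar>2 * P t * P1 t\<bar>)"
    by (rule abs_integral_indicator_le[OF i2]) simp
  also have "\<dots> \<le> (LINT x|lborel. (P x)\<^sup>2 + (P1 x)\<^sup>2)"
  proof (rule integral_mono)
    show "integrable lborel (\<lambda>t. \<bar>2 * P t * P1 t\<bar>)" using i2 by simp
    show "integrable lborel (\<lambda>x. (P x)\<^sup>2 + (P1 x)\<^sup>2)" using LP LP1 by (auto simp: L2_def)
    fix t
    show "\<bar>2 * P t * P1 t\<bar> \<le> (P t)\<^sup>2 + (P1 t)\<^sup>2"
      using sum_squares_bound[of "\<bar>P t\<bar>" "\<bar>P1 t\<bar>"] by (simp add: abs_mult)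
  qed
  finally show ?thesis using F1 by simp
qed

lemma L2_exists_small:
  assumes "L2 P" shows "\<exists>y. (P y)\<^sup>2 \<le> 1"
proof (rule ccontr)
  assume "\<not> ?thesis"
  then show False
    using integrable_not_ge_on_ray[of "\<lambda>x. (P x)\<^sup>2" 1 0] assms by (auto simp: L2_def not_le less_imp_le)
qed

lemma H1_bounded:
  assumes dP: "\<And>x. (P has_real_derivative P1 x) (at x)" and cP1: "continuous_on UNIV P1"
    and LP: "L2 P" and LP1: "L2 P1"
  shows "\<exists>B. \<forall>x. \<bar>P x\<bar> \<le> B"
proof -
  define J where "J = (LINT x|lborel. (P x)\<^sup>2 + (P1 x)\<^sup>2)"
  have J0: "J \<ge> 0" unfolding J_def by (intro integral_nonneg_AE) auto
  obtain y where y: "(P y)\<^sup>2 \<le> 1" using L2_exists_small[OF LP] by blast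
  have sq: "(P x)\<^sup>2 \<le> 1 + J" for x
  proof (cases "y \<le> x")
    case True then show ?thesis using sq_diff_le_H1_norm[OF dP cP1 LP LP1 True] y by (simp add: J_def)
  next
    case False then show ?thesis using sq_diff_le_H1_norm[OF dP cP1 LP LP1, of x y] y by (simp add: J_def)
  qed
  have "\<bar>P x\<bar> \<le> 1 + J" for x
  proof (cases "\<bar>P x\<bar> \<le> 1")
    case True then show ?thesis using J0 by simp
  next
    case False
    then have "\<bar>P x\<bar> * 1 \<le> \<bar>P x\<bar> * \<bar>P x\<bar>" by (intro mult_left_mono) auto
    then show ?thesis using sq[of x] by (simp add: power2_eq_square abs_mult_self_eq)
  qed
  then show ?thesis by blast
qed

lemma continuous_sq_integral_eq_0:
  fixes g :: "real \<Rightarrow> real"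
  assumes cg: "continuous_on UNIV g" and ig: "integrable lborel (\<lambda>x. (g x)\<^sup>2)"
    and z: "(LINT x|lborel. (g x)\<^sup>2) = 0"
  shows "g x0 = 0"
proof (rule ccontr)
  assume ne: "g x0 \<noteq> 0"
  define m where "m = \<bar>g x0\<bar> / 2"
  have m: "m > 0" using ne by (simp add: m_def)
  have "isCont g x0" using cg by (simp add: continuous_on_eq_continuous_at)
  then obtain d where d: "d > 0" and dd: "\<And>y. dist y x0 < d \<Longrightarrow> dist (g y) (g x0) < m"
    unfolding continuous_at_eps_delta using m by blast
  have low: "m\<^sup>2 \<le> (g y)\<^sup>2" if "y \<in> {x0 - d/2..x0 + d/2}" for y
  proof -
    have "dist y x0 < d" using that d by (auto simp: dist_real_def)
    then have "\<bar>g y - g x0\<bar> < m" using dd by (simp add: dist_real_def)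
    then have "\<bar>g y\<bar> \<ge> m" unfolding m_def by linarith
    then show ?thesis using m by (metis abs_ge_zero abs_of_pos power2_abs power_mono)
  qed
  have "d * m\<^sup>2 = (LINT x|lborel. indicator {x0 - d/2..x0 + d/2} x * m\<^sup>2)"
    using d by simp
  also have "\<dots> \<le> (LINT x|lborel. (g x)\<^sup>2)"
  proof (rule integral_mono)
    show "integrable lborel (\<lambda>x. indicator {x0 - d/2..x0 + d/2} x * m\<^sup>2)"
      using integrable_indicator_iff[of lborel "{x0 - d/2..x0 + d/2}"] d
      by (intro integrable_mult_left) (simp add: emeasure_lborel_Icc_eq)
    show "integrable lborel (\<lambda>x. (g x)\<^sup>2)" by (rule ig)
    fix x show "indicator {x0 - d/2..x0 + d/2} x * m\<^sup>2 \<le> (g x)\<^sup>2"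
      using low[of x] by (auto simp: indicator_def)
  qed
  finally have "d * m\<^sup>2 \<le> 0" using z by simp
  moreover have "d * m\<^sup>2 > 0" using d m by simp
  ultimately show False by simp
qed

lemma const_sq_integrable_eq_0:
  fixes k :: real
  assumes "integrable lborel (\<lambda>x::real. k\<^sup>2)"
  shows "k = 0"
proof (rule ccontr)
  assume "k \<noteq> 0"
  then show False using integrable_not_ge_on_ray[of "\<lambda>_. k\<^sup>2" "k\<^sup>2" 0] assms by simp
qed

section \<open>Homogeneous nonlinearities\<close>

lemma homogeneous_eq_0:
  assumes p: "p \<noteq> 0" and h: "homogeneous p f" shows "f 0 = 0"
proof -
  have "f 0 = 2 powr p * f 0" using h[unfolded homogeneous_def, rule_format, of 2 0] by simp
  moreover have "2 powr p \<noteq> (1::real)" using p by simp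
  ultimately show ?thesis by (metis mult_cancel_right2)
qed

lemma homogeneous_pos: "homogeneous p f \<Longrightarrow> s > 0 \<Longrightarrow> f s = s powr p * f 1"
  unfolding homogeneous_def by (metis mult.right_neutral)

lemma homogeneous_neg: "homogeneous p f \<Longrightarrow> s < 0 \<Longrightarrow> f s = (- s) powr p * f (- 1)"
  unfolding homogeneous_def by (metis mult_minus1_right minus_minus neg_0_less_iff_less)

lemma homogeneous_bound:
  assumes p: "p \<noteq> 0" and h: "homogeneous p f"
  shows "\<bar>f s\<bar> \<le> (\<bar>f 1\<bar> + \<bar>f (-1)\<bar>) * \<bar>s\<bar> powr p"
proof -
  consider "s > 0" | "s = 0" | "s < 0" by linarith
  then show ?thesis
  proof cases
    case 1 then show ?thesis using homogeneous_pos[OF h 1] by (simp add: abs_mult mult_right_mono)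
  next
    case 2 then show ?thesis using homogeneous_eq_0[OF p h] by simp
  next
    case 3 then show ?thesis using homogeneous_neg[OF h 3] by (simp add: abs_mult mult_right_mono)
  qed
qed

lemma homogeneous_linear_bound:
  assumes p: "p \<ge> 1" and h: "homogeneous p f" and B: "\<bar>s\<bar> \<le> B"
  shows "\<bar>f s\<bar> \<le> (\<bar>f 1\<bar> + \<bar>f (-1)\<bar>) * B powr (p - 1) * \<bar>s\<bar>"
proof (cases "s = 0")
  case True then show ?thesis using homogeneous_eq_0[OF _ h] p by simp
next
  case False
  have "\<bar>s\<bar> powr p = \<bar>s\<bar> powr (p - 1) * \<bar>s\<bar>" using False by (simp add: powr_diff)
  also have "\<dots> \<le> B powr (p - 1) * \<bar>s\<bar>" using B p by (intro mult_right_mono powr_mono2) auto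
  finally have "\<bar>s\<bar> powr p \<le> B powr (p - 1) * \<bar>s\<bar>" .
  then show ?thesis using homogeneous_bound[OF _ h, of s] p
    by (smt (verit, best) abs_ge_zero mult.assoc mult_left_mono)
qed

lemma homogeneous_euler:
  assumes h: "homogeneous p f" and d: "\<And>x. (f has_real_derivative f1 x) (at x)"
  shows "s * f1 s = p * f s"
proof -
  have d1: "((\<lambda>t. f (t * s)) has_real_derivative f1 (1 * s) * s) (at 1)"
    by (rule DERIV_chain2[OF d]) (auto intro!: derivative_eq_intros)
  have d2: "((\<lambda>t. t powr p * f s) has_real_derivative p * 1 powr (p - 1) * f s) (at 1)"
    by (auto intro!: derivative_eq_intros)
  have d3: "((\<lambda>t. f (t * s)) has_real_derivative p * 1 powr (p - 1) * f s) (at 1)"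
    by (rule has_field_derivative_transform_within_open[OF d2, of "{0<..}"])
       (use h in \<open>auto simp: homogeneous_def\<close>)
  show ?thesis using DERIV_unique[OF d1 d3] by (simp add: mult.commute)
qed

text \<open>By Euler's identity \<open>s * f' s = p * f s\<close>, this is the primitive \<open>F\<close> of \<open>f\<close> with \<open>F 0 = 0\<close>.\<close>
definition hom_potential :: "real \<Rightarrow> (real \<Rightarrow> real) \<Rightarrow> real \<Rightarrow> real" where
  "hom_potential p f s = s * f s / (p + 1)"

lemma hom_potential_has_derivative:
  assumes p: "p \<noteq> -1" and h: "homogeneous p f" and d: "\<And>x. (f has_real_derivative f1 x) (at x)"
  shows "(hom_potential p f has_real_derivative f s) (at s)"
proof -
  have "(hom_potential p f has_real_derivative (f s + s * f1 s) / (p + 1)) (at s)"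
    unfolding hom_potential_def[abs_def] using d p by (auto intro!: derivative_eq_intros)
  also have "(f s + s * f1 s) / (p + 1) = f s" using homogeneous_euler[OF h d, of s] p by (simp add: field_simps)
  finally show ?thesis .
qed

lemma hom_potential_nonneg:
  assumes p: "p \<noteq> -1" and h: "homogeneous p f" and d: "\<And>x. (f has_real_derivative f1 x) (at x)"
    and F: "\<forall>u. (LBINT s=ereal 0..ereal u. f s) \<ge> 0"
  shows "hom_potential p f u \<ge> 0"
proof -
  have cf: "continuous_on UNIV f" by (meson DERIV_isCont continuous_at_imp_continuous_on d)
  have "(LBINT s=ereal 0..ereal u. f s) = hom_potential p f u - hom_potential p f 0"
    by (rule interval_integral_FTC_finite)
       (auto intro: continuous_on_subset[OF cf] has_field_derivative_at_within hom_potential_has_derivative[OF p h d]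
             simp: has_real_derivative_iff_has_vector_derivative[symmetric])
  then show ?thesis using F[rule_format, of u] by (simp add: hom_potential_def)
qed

section \<open>Integral identities for classical solutions\<close>

context classical_solution
begin

lemma continuous_P: "continuous_on UNIV P"
  and continuous_P1: "continuous_on UNIV P1"
  and continuous_P2: "continuous_on UNIV P2"
  and continuous_P3: "continuous_on UNIV P3"
  by (meson DERIV_isCont continuous_at_imp_continuous_on P_deriv P1_deriv P2_deriv P3_deriv)+

lemma measurable_P [measurable]: "P \<in> borel_measurable borel"
  using continuous_P by (rule borel_measurable_continuous_onI)

lemma integrable_P_sq: "integrable lborel (\<lambda>x. (P x)\<^sup>2)"
  and integrable_P1_sq: "integrable lborel (\<lambda>x. (P1 x)\<^sup>2)"
  and integrable_P2_sq: "integrable lborel (\<lambda>x. (P2 x)\<^sup>2)"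
  and integrable_P_P1: "integrable lborel (\<lambda>x. P x * P1 x)"
  and integrable_P_P2: "integrable lborel (\<lambda>x. P x * P2 x)"
  and integrable_P1_P2: "integrable lborel (\<lambda>x. P1 x * P2 x)"
  using L2_P L2_P1 L2_P2 by (auto simp: L2_def intro: L2_integrable_mult)

lemma P_not_zero_imp_P1_sq_integral_pos:
  assumes "\<not> (\<forall>x. P x = 0)"
  shows "(LINT x|lborel. (P1 x)\<^sup>2) > 0"
proof (rule ccontr)
  assume "\<not> ?thesis"
  moreover have "(LINT x|lborel. (P1 x)\<^sup>2) \<ge> 0" by (intro integral_nonneg_AE) auto
  ultimately have "(LINT x|lborel. (P1 x)\<^sup>2) = 0" by simp
  then have "P1 x = 0" for x by (rule continuous_sq_integral_eq_0[OF continuous_P1 integrable_P1_sq])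
  then have const: "P x = P 0" for x by (intro DERIV_isconst_all) (use P_deriv in auto)
  have "integrable lborel (\<lambda>x::real. (P 0)\<^sup>2)" using integrable_P_sq by (subst (asm) const)
  then have "P 0 = 0" by (rule const_sq_integrable_eq_0)
  then show False using assms const by simp
qed

lemma P2_sq_integral_eq_0_imp:
  assumes "(LINT x|lborel. (P2 x)\<^sup>2) = 0"
  shows "(LINT x|lborel. (P1 x)\<^sup>2) = 0"
proof -
  have "P2 x = 0" for x by (rule continuous_sq_integral_eq_0[OF continuous_P2 integrable_P2_sq assms])
  then have const: "P1 x = P1 0" for x by (intro DERIV_isconst_all) (use P1_deriv in auto)
  have "integrable lborel (\<lambda>x::real. (P1 0)\<^sup>2)" using integrable_P1_sq by (subst (asm) const)
  then have "P1 0 = 0" by (rule const_sq_integrable_eq_0)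
  then show ?thesis using const by simp
qed

lemma interpolation_inequality:
  assumes t: "t > 0"
  shows "2 * (LINT x|lborel. (P1 x)\<^sup>2) \<le> t * (LINT x|lborel. (P2 x)\<^sup>2) + (LINT x|lborel. (P x)\<^sup>2) / t"
proof -
  have "(LINT x|lborel. (P1 x)\<^sup>2 + P x * P2 x) = 0"
  proof (rule integral_derivative_eq_0[of "\<lambda>x. P x * P1 x" _ "\<lambda>x. (P x)\<^sup>2 / 2" "\<lambda>x. P x * P1 x" "\<lambda>x. 0"])
    show "((\<lambda>x. P x * P1 x) has_real_derivative (P1 x)\<^sup>2 + P x * P2 x) (at x)" for x
      using P_deriv[of x] P1_deriv[of x] by (auto intro!: derivative_eq_intros simp: power2_eq_square)
    show "((\<lambda>x. (P x)\<^sup>2 / 2) has_real_derivative P x * P1 x) (at x)" for x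
      using P_deriv[of x] by (auto intro!: derivative_eq_intros)
  qed (use integrable_P_sq integrable_P1_sq integrable_P_P2 in \<open>auto intro!: continuous_intros
      continuous_P continuous_P1 continuous_P2\<close>)
  then have B: "(LINT x|lborel. (P1 x)\<^sup>2) = - (LINT x|lborel. P x * P2 x)"
    using integrable_P1_sq integrable_P_P2 by simp
  txt \<open>\<open>- 2 P P2 \<le> t P2\<^sup>2 + P\<^sup>2 / t\<close> is the expansion of \<open>(t P2 + P)\<^sup>2 / t \<ge> 0\<close>.\<close>
  have "- 2 * (LINT x|lborel. P x * P2 x) \<le> (LINT x|lborel. t * (P2 x)\<^sup>2 + (P x)\<^sup>2 / t)"
  proof -
    have "- 2 * (P x * P2 x) \<le> t * (P2 x)\<^sup>2 + (P x)\<^sup>2 / t" for x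
    proof -
      have "0 \<le> (t * P2 x + P x)\<^sup>2 / t" using t by simp
      also have "(t * P2 x + P x)\<^sup>2 / t = t * (P2 x)\<^sup>2 + (P x)\<^sup>2 / t + 2 * (P x * P2 x)"
        using t by (simp add: power2_eq_square field_simps)
      finally show ?thesis by simp
    qed
    then have "(LINT x|lborel. - 2 * (P x * P2 x)) \<le> (LINT x|lborel. t * (P2 x)\<^sup>2 + (P x)\<^sup>2 / t)"
      using integrable_P_P2 integrable_P_sq integrable_P2_sq by (intro integral_mono) auto
    then show ?thesis by simp
  qed
  then show ?thesis using B integrable_P_sq integrable_P2_sq by simp
qed

end

locale homogeneous_classical_solution = classical_solution +
  fixes p :: real and f1 :: "real \<Rightarrow> real"
  assumes p_gt_1: "p > 1" and homogeneous_f: "homogeneous p f"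
    and f_deriv: "\<And>x. (f has_real_derivative f1 x) (at x)"
begin

lemma continuous_f_P: "continuous_on UNIV (\<lambda>x. f (P x))"
proof -
  have "continuous_on UNIV f" by (intro continuous_at_imp_continuous_on ballI DERIV_isCont[OF f_deriv])
  then show ?thesis by (rule continuous_on_compose2[OF _ continuous_P]) auto
qed

lemma potential_P_deriv: "((\<lambda>x. hom_potential p f (P x)) has_real_derivative f (P x) * P1 x) (at x)"
  using p_gt_1 by (intro DERIV_chain2[OF hom_potential_has_derivative[OF _ homogeneous_f f_deriv] P_deriv]) simp

lemma continuous_potential_P: "continuous_on UNIV (\<lambda>x. hom_potential p f (P x))"
  by (intro continuous_at_imp_continuous_on ballI DERIV_isCont[OF potential_P_deriv])

lemma integrable_P_f_P: "integrable lborel (\<lambda>x. P x * f (P x))"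
proof -
  obtain B0 where B0: "\<And>x. \<bar>P x\<bar> \<le> B0" using H1_bounded[OF P_deriv continuous_P1 L2_P L2_P1] by blast
  define K where "K = (\<bar>f 1\<bar> + \<bar>f (-1)\<bar>) * B0 powr (p - 1)"
  have fb: "\<bar>f (P x)\<bar> \<le> K * \<bar>P x\<bar>" for x
    unfolding K_def by (rule homogeneous_linear_bound[OF _ homogeneous_f B0]) (use p_gt_1 in simp)
  have "\<bar>P x * f (P x)\<bar> \<le> K * (P x)\<^sup>2" for x
  proof -
    have "\<bar>P x * f (P x)\<bar> \<le> \<bar>P x\<bar> * (K * \<bar>P x\<bar>)" unfolding abs_mult by (rule mult_left_mono[OF fb]) simp
    also have "\<dots> = K * (P x)\<^sup>2" by (simp add: power2_eq_square abs_mult_self_eq)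
    finally show ?thesis .
  qed
  moreover have [measurable]: "(\<lambda>x. f (P x)) \<in> borel_measurable borel"
    by (rule borel_measurable_continuous_onI[OF continuous_f_P])
  ultimately show ?thesis
  proof (intro Bochner_Integration.integrable_bound[OF integrable_mult_right[OF integrable_P_sq, of K]] AE_I2)
    show "norm (P x * f (P x)) \<le> norm (K * (P x)\<^sup>2)" if "\<And>x. \<bar>P x * f (P x)\<bar> \<le> K * (P x)\<^sup>2" for x
      using that[of x] by (simp add: order.trans[OF _ abs_ge_self])
  qed measurable
qed

lemma integrable_potential_P: "integrable lborel (\<lambda>x. hom_potential p f (P x))"
  using integrable_P_f_P by (simp add: hom_potential_def)

text \<open>The Hamiltonian is conserved along the equation; its constant value is zero since it is the
  sum of the derivative of the integrable function \<open>P1 * P2\<close> and an integrable function.\<close>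
lemma hamiltonian_eq_0:
  "P1 x * P3 x = (P2 x)\<^sup>2 / 2 - \<beta> / 2 * (P1 x)\<^sup>2 + a / 2 * (P x)\<^sup>2 + hom_potential p f (P x)"
proof -
  define T where "T x = P1 x * P3 x - (P2 x)\<^sup>2 / 2 + \<beta> / 2 * (P1 x)\<^sup>2 - a / 2 * (P x)\<^sup>2
    - hom_potential p f (P x)" for x
  have "(T has_real_derivative 0) (at x)" for x
  proof -
    have "(T has_real_derivative (P2 x * P3 x + P1 x * (a * P x - \<beta> * P2 x + f (P x)) - P2 x * P3 x
        + \<beta> * (P1 x * P2 x) - a * (P x * P1 x) - f (P x) * P1 x)) (at x)"
      unfolding T_def[abs_def]
      by (rule derivative_eq_intros P_deriv P1_deriv P2_deriv P3_deriv potential_P_deriv refl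
          | simp add: power2_eq_square)+
    then show ?thesis by (simp add: algebra_simps)
  qed
  then have T_const: "T x = T 0" for x by (intro DERIV_isconst_all) auto
  have "T 0 = 0"
  proof (rule derivative_plus_integrable_const_eq_0[of "\<lambda>x. P1 x * P2 x" "\<lambda>x. P2 x * P2 x + P1 x * P3 x"
        "\<lambda>x. - 3/2 * (P2 x)\<^sup>2 + \<beta> / 2 * (P1 x)\<^sup>2 - a / 2 * (P x)\<^sup>2 - hom_potential p f (P x)"])
    show "((\<lambda>x. P1 x * P2 x) has_real_derivative P2 x * P2 x + P1 x * P3 x) (at x)" for x
      using P1_deriv[of x] P2_deriv[of x] by (auto intro!: derivative_eq_intros)
    show "P2 x * P2 x + P1 x * P3 x + (- 3/2 * (P2 x)\<^sup>2 + \<beta> / 2 * (P1 x)\<^sup>2 - a / 2 * (P x)\<^sup>2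
        - hom_potential p f (P x)) = T 0" for x
      using T_const[of x] by (simp add: T_def power2_eq_square algebra_simps)
  qed (use integrable_P_sq integrable_P1_sq integrable_P2_sq integrable_potential_P integrable_P1_P2
      in \<open>auto intro!: continuous_intros continuous_P continuous_P1 continuous_P2 continuous_potential_P\<close>)
  then show ?thesis using T_const[of x] by (simp add: T_def algebra_simps)
qed

text \<open>Testing the equation against \<open>P\<close>.\<close>
lemma energy_identity:
  "(LINT x|lborel. (P2 x)\<^sup>2) - \<beta> * (LINT x|lborel. (P1 x)\<^sup>2) - a * (LINT x|lborel. (P x)\<^sup>2)
     - (p + 1) * (LINT x|lborel. hom_potential p f (P x)) = 0"
proof -
  have "(LINT x|lborel. a * (P x)\<^sup>2 + P x * f (P x) - (P2 x)\<^sup>2 + \<beta> * (P1 x)\<^sup>2) = 0"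
  proof (rule integral_derivative_eq_0[of "\<lambda>x. P x * P3 x - P1 x * P2 x + \<beta> * (P x * P1 x)" _
        "\<lambda>x. P x * P2 x" "\<lambda>x. P1 x * P2 x + P x * P3 x" "\<lambda>x. - 2 * (P1 x * P2 x) + \<beta> * (P x * P1 x)"])
    show "((\<lambda>x. P x * P3 x - P1 x * P2 x + \<beta> * (P x * P1 x)) has_real_derivative
        a * (P x)\<^sup>2 + P x * f (P x) - (P2 x)\<^sup>2 + \<beta> * (P1 x)\<^sup>2) (at x)" for x
    proof -
      have "((\<lambda>x. P x * P3 x - P1 x * P2 x + \<beta> * (P x * P1 x)) has_real_derivative
        P1 x * P3 x + P x * (a * P x - \<beta> * P2 x + f (P x)) - (P2 x * P2 x + P1 x * P3 x)
          + \<beta> * (P1 x * P1 x + P x * P2 x)) (at x)"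
        using P_deriv[of x] P1_deriv[of x] P2_deriv[of x] P3_deriv[of x] by (auto intro!: derivative_eq_intros)
      then show ?thesis by (simp add: power2_eq_square algebra_simps)
    qed
    show "((\<lambda>x. P x * P2 x) has_real_derivative P1 x * P2 x + P x * P3 x) (at x)" for x
      using P_deriv[of x] P2_deriv[of x] by (auto intro!: derivative_eq_intros)
    show "P x * P3 x - P1 x * P2 x + \<beta> * (P x * P1 x)
        = P1 x * P2 x + P x * P3 x + (- 2 * (P1 x * P2 x) + \<beta> * (P x * P1 x))" for x
      by (simp add: algebra_simps)
  qed (use integrable_P_sq integrable_P1_sq integrable_P2_sq integrable_P_f_P integrable_P_P1
      integrable_P_P2 integrable_P1_P2
      in \<open>auto intro!: continuous_intros continuous_P continuous_P1 continuous_P2 continuous_f_P\<close>)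
  moreover have "(LINT x|lborel. P x * f (P x)) = (p + 1) * (LINT x|lborel. hom_potential p f (P x))"
    using p_gt_1 by (simp add: hom_potential_def)
  ultimately show ?thesis
    using integrable_P_sq integrable_P1_sq integrable_P2_sq integrable_P_f_P by simp
qed

text \<open>Integrating the Hamiltonian, using that \<open>P2\<^sup>2 + P1 * P3\<close> is the derivative of \<open>P1 * P2\<close>.\<close>
lemma hamiltonian_identity:
  "3/2 * (LINT x|lborel. (P2 x)\<^sup>2) - \<beta>/2 * (LINT x|lborel. (P1 x)\<^sup>2) + a/2 * (LINT x|lborel. (P x)\<^sup>2)
     + (LINT x|lborel. hom_potential p f (P x)) = 0"
proof -
  have Q: "P2 x * P2 x + P1 x * P3 x
      = 3/2 * (P2 x)\<^sup>2 - \<beta>/2 * (P1 x)\<^sup>2 + a/2 * (P x)\<^sup>2 + hom_potential p f (P x)" for x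
    using hamiltonian_eq_0[of x] by (simp add: power2_eq_square algebra_simps)
  have "(LINT x|lborel. P2 x * P2 x + P1 x * P3 x) = 0"
  proof (rule integral_derivative_eq_0[of "\<lambda>x. P1 x * P2 x" _ "\<lambda>x. (P1 x)\<^sup>2 / 2" "\<lambda>x. P1 x * P2 x" "\<lambda>x. 0"])
    show "((\<lambda>x. P1 x * P2 x) has_real_derivative P2 x * P2 x + P1 x * P3 x) (at x)" for x
      using P1_deriv[of x] P2_deriv[of x] by (auto intro!: derivative_eq_intros)
    show "integrable lborel (\<lambda>x. P2 x * P2 x + P1 x * P3 x)"
      unfolding Q using integrable_P_sq integrable_P1_sq integrable_P2_sq integrable_potential_P by auto
    show "((\<lambda>x. (P1 x)\<^sup>2 / 2) has_real_derivative P1 x * P2 x) (at x)" for x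
      using P1_deriv[of x] by (auto intro!: derivative_eq_intros)
  qed (use integrable_P1_sq in \<open>auto intro!: continuous_intros continuous_P1 continuous_P2 continuous_P3\<close>)
  then show ?thesis
    unfolding Q using integrable_P_sq integrable_P1_sq integrable_P2_sq integrable_potential_P by simp
qed

end

section \<open>Nonexistence\<close>

lemma identities_imp_beta_ge:
  fixes A B C G a \<beta> p :: real
  assumes E1: "A - \<beta> * B - a * C - (p + 1) * G = 0"
    and E2: "3/2 * A - \<beta>/2 * B + a/2 * C + G = 0"
    and interpolation: "\<And>t. t > 0 \<Longrightarrow> 2 * B \<le> t * A + C / t"
    and A: "A \<ge> 0" and B: "B > 0" and C: "C \<ge> 0" and p: "p > 1" and a: "a \<ge> 0"
  shows "\<beta> \<ge> 2 * sqrt ((3 * p + 5) * (p - 1) * a) / (p + 3)"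
proof -
  have "2 * (A - \<beta> * B - a * C - (p + 1) * G) + 2 * (p + 1) * (3/2 * A - \<beta>/2 * B + a/2 * C + G) = 0"
    using E1 E2 by simp
  then have comb: "(3 * p + 5) * A + (p - 1) * a * C = (p + 3) * \<beta> * B"
    by (simp add: algebra_simps field_simps)
  define \<kappa> where "\<kappa> = sqrt ((3 * p + 5) * (p - 1) * a)"
  have "2 * \<kappa> * B \<le> (p + 3) * \<beta> * B"
  proof (cases "a = 0")
    case True
    then have "(p + 3) * \<beta> * B = (3 * p + 5) * A" using comb by simp
    also have "\<dots> \<ge> 0" using A p by simp
    finally show ?thesis using True by (simp add: \<kappa>_def)
  next
    case False
    then have ap: "(p - 1) * a > 0" using p a by simp
    then have pos: "(3 * p + 5) * (p - 1) * a > 0" using p by (simp add: mult.assoc)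
    then have k: "\<kappa> > 0" "\<kappa>\<^sup>2 = (3 * p + 5) * (p - 1) * a" by (simp_all add: \<kappa>_def)
    txt \<open>The optimal choice of \<open>t\<close> in the interpolation inequality.\<close>
    define t where "t = \<kappa> / ((p - 1) * a)"
    have t: "t > 0" "\<kappa> * t = 3 * p + 5" "\<kappa> / t = (p - 1) * a"
      using k ap p a False by (simp_all add: t_def power2_eq_square field_simps)
    have "\<kappa> * (2 * B) \<le> \<kappa> * (t * A + C / t)" using interpolation[OF t(1)] k by simp
    also have "\<dots> = (\<kappa> * t) * A + (\<kappa> / t) * C" by (simp add: algebra_simps)
    also have "\<dots> = (p + 3) * \<beta> * B" using t comb by simp
    finally show ?thesis by simp
  qed
  then have "2 * \<kappa> \<le> (p + 3) * \<beta>" using B by (simp add: mult_le_cancel_right)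
  then show ?thesis using p by (simp add: \<kappa>_def field_simps)
qed

lemma identities_imp_eq_0:
  fixes A B C G a \<beta> p :: real
  assumes E1: "A - \<beta> * B - a * C - (p + 1) * G = 0"
    and E2: "3/2 * A - \<beta>/2 * B + a/2 * C + G = 0"
    and "A \<ge> 0" "C \<ge> 0" "G \<ge> 0" "a \<ge> 0" "p \<ge> -3"
  shows "A = 0"
proof -
  have "2 * (3/2 * A - \<beta>/2 * B + a/2 * C + G) - (A - \<beta> * B - a * C - (p + 1) * G) = 0"
    using E1 E2 by simp
  then have "2 * A + 2 * a * C + (p + 3) * G = 0"
    by (simp add: algebra_simps)
  moreover have "a * C \<ge> 0" "(p + 3) * G \<ge> 0" using assms by auto
  ultimately show ?thesis using assms by linarith
qed

lemma nontrivial_weak_solution_classical: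
  assumes p: "p > 1" and f: "C2 f" "homogeneous p f"
    and H: "H2 \<phi>" and W: "weak_solution c \<beta> f \<phi>" and nz: "\<not> (AE x in lborel. \<phi> x = 0)"
  obtains P P1 P2 P3 f1
  where "homogeneous_classical_solution (c\<^sup>2 - 1) \<beta> f P P1 P2 P3 p f1" "\<not> (\<forall>x. P x = 0)"
proof -
  obtain f1 where df: "\<And>x. (f has_real_derivative f1 x) (at x)" using f(1) unfolding C2_def by blast
  have "continuous_on UNIV f" by (intro continuous_at_imp_continuous_on ballI DERIV_isCont[OF df])
  then obtain P P1 P2 P3 where sol: "classical_solution (c\<^sup>2 - 1) \<beta> f P P1 P2 P3"
    and ae: "AE x in lborel. \<phi> x = P x"
    using weak_solution_classical[OF H W] by blast
  have "\<not> (\<forall>x. P x = 0)"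
  proof
    assume "\<forall>x. P x = 0"
    then show False using ae nz by simp
  qed
  moreover have "homogeneous_classical_solution (c\<^sup>2 - 1) \<beta> f P P1 P2 P3 p f1"
    using sol p f(2) df
    by (simp add: homogeneous_classical_solution_def homogeneous_classical_solution_axioms_def)
  ultimately show thesis by (rule that[rotated])
qed

theorem mainTheorem2:
  fixes p c \<beta> :: real and f :: "real \<Rightarrow> real"
  assumes "p > 1"
    and "C2 f"
    and "homogeneous p f"
    and "(c\<^sup>2 \<ge> 1 \<and> \<beta> < 2 * sqrt ((3 * p + 5) * (p - 1) * (c\<^sup>2 - 1)) / (p + 3))
         \<or> ((\<forall>u. (LBINT s=ereal 0..ereal u. f s) \<ge> 0) \<and> c\<^sup>2 \<ge> 1 \<and> \<beta> \<ge> 0)"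
  shows "\<not> (\<exists>\<phi>. H2 \<phi> \<and> weak_solution c \<beta> f \<phi> \<and> \<not> (AE x in lborel. \<phi> x = 0))"
proof
  assume "\<exists>\<phi>. H2 \<phi> \<and> weak_solution c \<beta> f \<phi> \<and> \<not> (AE x in lborel. \<phi> x = 0)"
  then obtain \<phi> where H: "H2 \<phi>" and W: "weak_solution c \<beta> f \<phi>" and nz: "\<not> (AE x in lborel. \<phi> x = 0)"
    by blast
  then obtain P P1 P2 P3 f1 where sol: "homogeneous_classical_solution (c\<^sup>2 - 1) \<beta> f P P1 P2 P3 p f1"
    and P_nz: "\<not> (\<forall>x. P x = 0)"
    using nontrivial_weak_solution_classical[OF assms(1-3)] by blast
  interpret homogeneous_classical_solution "c\<^sup>2 - 1" \<beta> f P P1 P2 P3 p f1 by (rule sol)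
  note B_pos = P_not_zero_imp_P1_sq_integral_pos[OF P_nz]
  note identities = energy_identity hamiltonian_identity
  have nonneg: "(LINT x|lborel. (u x)\<^sup>2) \<ge> 0" for u :: "real \<Rightarrow> real" by (intro integral_nonneg_AE) auto
  from assms(4) show False
  proof
    assume "c\<^sup>2 \<ge> 1 \<and> \<beta> < 2 * sqrt ((3 * p + 5) * (p - 1) * (c\<^sup>2 - 1)) / (p + 3)"
    then show False
      using identities_imp_beta_ge[OF identities interpolation_inequality nonneg B_pos nonneg p_gt_1] by simp
  next
    assume ii: "(\<forall>u. (LBINT s=ereal 0..ereal u. f s) \<ge> 0) \<and> c\<^sup>2 \<ge> 1 \<and> \<beta> \<ge> 0"
    then have "(LINT x|lborel. hom_potential p f (P x)) \<ge> 0"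
      using hom_potential_nonneg[OF _ homogeneous_f f_deriv] p_gt_1 by (intro integral_nonneg_AE) auto
    then have "(LINT x|lborel. (P2 x)\<^sup>2) = 0"
      using identities_imp_eq_0[OF identities nonneg nonneg] ii p_gt_1 by simp
    then show False using P2_sq_integral_eq_0_imp B_pos by simp
  qed
qed

end
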